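(* Let $\alpha\ne0$ and let $(L(s),P(s))_{s\in\mathbb Z}$ be a solution of the cmKP hierarchy with gauge parameter $\alpha$. Let $\varphi(s,t)$ be a function satisfying $\partial\varphi/\partial x=b^{(1)}_1(s,t)$ and $\partial\varphi/\partial t_n=b^{(n)}_n(s,t)$ for all $n\ge1$. Then for any $\beta$ (including $\beta=0$), the pair $$\tilde L(s):=e^{(\alpha-\beta)\varphi(s,t)}L(s)e^{-(\alpha-\beta)\varphi(s,t)},\qquad \tilde P(s):=e^{(\alpha-\beta)\varphi(s+1,t)}P(s)e^{-(\alpha-\beta)\varphi(s,t)}$$ is a solution of the cmKP hierarchy with gauge parameter $\beta$ (for $\beta=0$ the system with $B_n(s)=(L(s)^n)_{\ge0}$). Consequently the cmKP hierarchies with different gauge parameters are equivalent via this transformation.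
   Context: Let $s\in\mathbb Z$, $t=(t_1,t_2,\dots)$, $\partial=\partial_x$; operators are formal microdifferential operators in $\partial$ with coefficients depending on $(s,x,t)$, and $(\cdot)_{\ge0}$ is the projection onto the differential operator part. Fix a gauge parameter $\alpha$. Consider $L(s)=\partial+u_1(s,t)+u_2(s,t)\partial^{-1}+\cdots$ and $P(s)=p_0(s,t)\partial+p_1(s,t)$ with $p_0$ nowhere zero, subject to $(1-\alpha)p_0u_1+\alpha p_1=0$. Define $P^{(n)}(s)=P(s+n-1)\cdots P(s+1)P(s)$ for $n>0$, $P^{(0)}(s)=1$, $P^{(n)}(s)=P(s+n)^{-1}\cdots P(s-2)^{-1}P(s-1)^{-1}$ for $n<0$. Every microdifferential operator has a unique expansion $\sum_\nu a_\nu P^{(\nu)}(s)$; write $L(s)^n=\sum_{j\ge0}b^{(n)}_j(s,t)P^{(n-j)}(s)$ and define $B_n(s):=(L(s)^n)_{\ge0}-\alpha b^{(n)}_n(s,t)=\sum_{j=0}^{n-1}b^{(n)}_jP^{(n-j)}(s)+(1-\alpha)b^{(n)}_n$ (the constraint is equivalent to $B_1(s)=\partial$). The cmKP hierarchy with gauge parameter $\alpha$ is the system $\partial_{t_n}L(s)=[B_n(s),L(s)]$, $L(s+1)P(s)=P(s)L(s)$, $\partial_{t_n}P(s)=B_n(s+1)P(s)-P(s)B_n(s)$ for all $s\in\mathbb Z$, $n\ge1$. *)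

theory Defs
  imports "HOL-Analysis.Analysis"
begin

text \<open>A point is p :: nat => real, where coordinate 0 is x
  and coordinate n (n >= 1) is the time t_n.  The discrete variable s is kept
  as an outer index (operators are families indexed by s :: int).\<close>

type_synonym coef = "(nat \<Rightarrow> real) \<Rightarrow> complex"

text \<open>Formal microdifferential operators: A m is the coefficient of d^m (m :: int).\<close>
type_synonym mdo = "int \<Rightarrow> coef"

definition cm_pd :: "nat \<Rightarrow> coef \<Rightarrow> coef" where
  "cm_pd i f = (\<lambda>p. vector_derivative (\<lambda>y. f (p(i := y))) (at (p i)))"

fun cm_iter_pd :: "nat list \<Rightarrow> coef \<Rightarrow> coef" where
  "cm_iter_pd [] f = f"
| "cm_iter_pd (i # is) f = cm_pd i (cm_iter_pd is f)"

definition cm_smooth :: "coef \<Rightarrow> bool" where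
  "cm_smooth f \<longleftrightarrow>
     (\<forall>ds i p. (\<lambda>y. cm_iter_pd ds f (p(i := y))) differentiable (at (p i))) \<and>
     (\<forall>ds i j. cm_pd i (cm_pd j (cm_iter_pd ds f)) = cm_pd j (cm_pd i (cm_iter_pd ds f)))"

definition is_mdo :: "mdo \<Rightarrow> bool" where
  "is_mdo A \<longleftrightarrow> (\<exists>N. \<forall>m>N. A m = (\<lambda>p. 0))"

definition cm_ub :: "mdo \<Rightarrow> int" where
  "cm_ub A = (SOME N. \<forall>m>N. A m = (\<lambda>p. 0))"

text \<open>Product: (a d^i)(b d^j) = sum_k binom(i,k) a (d_x^k b) d^(i+j-k).\<close>
definition cm_mul :: "mdo \<Rightarrow> mdo \<Rightarrow> mdo" where
  "cm_mul A B = (\<lambda>m p. \<Sum>i\<in>{m - cm_ub B .. cm_ub A}. \<Sum>k\<in>{0..nat (cm_ub A + cm_ub B - m)}.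
       ((of_int i :: complex) gchoose k) * A i p * (cm_pd 0 ^^ k) (B (m - i + int k)) p)"

definition cm_const :: "coef \<Rightarrow> mdo" where
  "cm_const c = (\<lambda>m. if m = 0 then c else (\<lambda>p. 0))"

definition cm_one :: mdo where
  "cm_one = cm_const (\<lambda>p. 1)"

definition cm_add :: "mdo \<Rightarrow> mdo \<Rightarrow> mdo" where
  "cm_add A B = (\<lambda>m p. A m p + B m p)"

definition cm_sub :: "mdo \<Rightarrow> mdo \<Rightarrow> mdo" where
  "cm_sub A B = (\<lambda>m p. A m p - B m p)"

definition cm_comm :: "mdo \<Rightarrow> mdo \<Rightarrow> mdo" where
  "cm_comm A B = cm_sub (cm_mul A B) (cm_mul B A)"

definition cm_proj :: "mdo \<Rightarrow> mdo" where
  "cm_proj A = (\<lambda>m. if m \<ge> 0 then A m else (\<lambda>p. 0))"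

definition cm_dop :: "nat \<Rightarrow> mdo \<Rightarrow> mdo" where
  "cm_dop i A = (\<lambda>m. cm_pd i (A m))"

fun cm_pow :: "mdo \<Rightarrow> nat \<Rightarrow> mdo" where
  "cm_pow A 0 = cm_one"
| "cm_pow A (Suc n) = cm_mul A (cm_pow A n)"

definition cm_inv :: "mdo \<Rightarrow> mdo" where
  "cm_inv A = (THE B. is_mdo B \<and> cm_mul B A = cm_one \<and> cm_mul A B = cm_one)"

fun cm_Pup :: "(int \<Rightarrow> mdo) \<Rightarrow> int \<Rightarrow> nat \<Rightarrow> mdo" where
  "cm_Pup P s 0 = cm_one"
| "cm_Pup P s (Suc k) = cm_mul (P (s + int k)) (cm_Pup P s k)"

fun cm_Pdown :: "(int \<Rightarrow> mdo) \<Rightarrow> int \<Rightarrow> nat \<Rightarrow> mdo" where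
  "cm_Pdown P s 0 = cm_one"
| "cm_Pdown P s (Suc k) = cm_mul (cm_inv (P (s - int (Suc k)))) (cm_Pdown P s k)"

definition cm_Pn :: "(int \<Rightarrow> mdo) \<Rightarrow> int \<Rightarrow> int \<Rightarrow> mdo" where
  "cm_Pn P s n = (if n \<ge> 0 then cm_Pup P s (nat n) else cm_Pdown P s (nat (- n)))"

text \<open>Coefficients b^(n)_j(s) of the expansion L(s)^n = sum_j b^(n)_j(s) P^(n-j)(s).\<close>
definition cm_b :: "(int \<Rightarrow> mdo) \<Rightarrow> (int \<Rightarrow> mdo) \<Rightarrow> int \<Rightarrow> nat \<Rightarrow> nat \<Rightarrow> coef" where
  "cm_b L P s n = (THE b. \<forall>m. cm_pow (L s) n m =
      (\<lambda>p. \<Sum>j\<in>{j::nat. int j \<le> int n - m}.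
              cm_mul (cm_const (b j)) (cm_Pn P s (int n - int j)) m p))"

definition cm_B :: "complex \<Rightarrow> (int \<Rightarrow> mdo) \<Rightarrow> (int \<Rightarrow> mdo) \<Rightarrow> int \<Rightarrow> nat \<Rightarrow> mdo" where
  "cm_B \<alpha> L P s n = cm_sub (cm_proj (cm_pow (L s) n)) (cm_const (\<lambda>p. \<alpha> * cm_b L P s n n p))"

definition cmKP :: "complex \<Rightarrow> (int \<Rightarrow> mdo) \<Rightarrow> (int \<Rightarrow> mdo) \<Rightarrow> bool" where
  "cmKP \<alpha> L P \<longleftrightarrow>
     (\<forall>s. is_mdo (L s) \<and> L s 1 = (\<lambda>p. 1) \<and> (\<forall>m>1. L s m = (\<lambda>p. 0)) \<and> (\<forall>m. cm_smooth (L s m))) \<and>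
     (\<forall>s. (\<forall>m. m \<noteq> 0 \<and> m \<noteq> 1 \<longrightarrow> P s m = (\<lambda>p. 0)) \<and> (\<forall>p. P s 1 p \<noteq> 0) \<and>
          cm_smooth (P s 0) \<and> cm_smooth (P s 1)) \<and>
     (\<forall>s p. (1 - \<alpha>) * P s 1 p * L s 0 p + \<alpha> * P s 0 p = 0) \<and>
     (\<forall>s. cm_mul (L (s + 1)) (P s) = cm_mul (P s) (L s)) \<and>
     (\<forall>n\<ge>1. \<forall>s. cm_dop n (L s) = cm_comm (cm_B \<alpha> L P s n) (L s)) \<and>
     (\<forall>n\<ge>1. \<forall>s. cm_dop n (P s) =
          cm_sub (cm_mul (cm_B \<alpha> L P (s + 1) n) (P s)) (cm_mul (P s) (cm_B \<alpha> L P s n)))"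

end

theory Submission
  imports Defs "HOL-Computational_Algebra.Formal_Power_Series" "HOL-Library.Groups_Big_Fun"
begin

(* Microdifferential operators with smooth coefficients and bounded order form a ring, in which
   the multiplication operators E(s) by e(s) = exp((\<alpha> - \<beta>) \<phi>(s)) are units.  The new pair is
   L~(s) = E(s) L(s) E(s)^-1 and P~(s) = E(s+1) P(s) E(s)^-1, so that
   P~^(k)(s) = E(s+k) P^(k)(s) E(s)^-1 and L~(s)^n = E(s) L(s)^n E(s)^-1; comparing expansions
   gives b~^(n)_j(s) = e(s) b^(n)_j(s) e(s+n-j)^-1, in particular b~^(n)_n = b^(n)_n.
   With K_n = (\<alpha> - \<beta>) b^(n)_n the hypothesis on \<phi> gives d_{t_n} E = E K_n and
   B~_n = E B_n E^-1 + K_n, and the Leibniz rule for d_{t_n} turns the Lax equations with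
   parameter \<alpha> into those with parameter \<beta>.  For the constraint, b^(1)_1 = u_1 - p_1/p_0 and
   the old constraint give \<alpha> d_x \<phi> = u_1 (here \<alpha> \<noteq> 0 is used), which is exactly the
   correction that the x-derivative of e(s) introduces into the new constraint. *)

section \<open>Smooth coefficient functions\<close>

definition partially_differentiable :: "coef \<Rightarrow> bool" where
  "partially_differentiable f \<longleftrightarrow> (\<forall>i p. (\<lambda>y. f (p(i := y))) differentiable (at (p i)))"

lemma has_vector_derivative_cm_pd:
  assumes "partially_differentiable f"
  shows "((\<lambda>y. f (p(i := y))) has_vector_derivative cm_pd i f p) (at (p i))"
  using assms unfolding partially_differentiable_def cm_pd_def
  by (simp add: vector_derivative_works)

lemma cm_pd_eqI:
  assumes "\<And>p. ((\<lambda>y. g (p(i := y))) has_vector_derivative h p) (at (p i))"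
  shows "cm_pd i g = h"
  unfolding cm_pd_def using assms vector_derivative_at by (intro ext) blast

lemma cm_pd_const [simp]: "cm_pd i (\<lambda>p. c) = (\<lambda>p. 0)"
  by (rule cm_pd_eqI) (rule has_vector_derivative_const)

lemma cm_pd_add:
  assumes "partially_differentiable f" "partially_differentiable g"
  shows "cm_pd i (\<lambda>p. f p + g p) = (\<lambda>p. cm_pd i f p + cm_pd i g p)"
  by (intro cm_pd_eqI has_vector_derivative_add has_vector_derivative_cm_pd assms)

lemma cm_pd_minus:
  assumes "partially_differentiable f"
  shows "cm_pd i (\<lambda>p. - f p) = (\<lambda>p. - cm_pd i f p)"
  by (intro cm_pd_eqI has_vector_derivative_minus has_vector_derivative_cm_pd assms)

lemma cm_pd_mult:
  assumes "partially_differentiable f" "partially_differentiable g"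
  shows "cm_pd i (\<lambda>p. f p * g p) = (\<lambda>p. f p * cm_pd i g p + cm_pd i f p * g p)"
proof (rule cm_pd_eqI)
  fix p
  show "((\<lambda>y. f (p(i := y)) * g (p(i := y))) has_vector_derivative
          f p * cm_pd i g p + cm_pd i f p * g p) (at (p i))"
    using has_vector_derivative_mult[OF has_vector_derivative_cm_pd[OF assms(1), of p i]
        has_vector_derivative_cm_pd[OF assms(2), of p i]]
    by simp
qed

lemma cm_pd_cmult:
  assumes "partially_differentiable f"
  shows "cm_pd i (\<lambda>p. c * f p) = (\<lambda>p. c * cm_pd i f p)"
  using cm_pd_mult[of "\<lambda>p. c" f i] assms by (simp add: partially_differentiable_def)

lemma has_vector_derivative_exp_partial:
  assumes "partially_differentiable f"
  shows "((\<lambda>y. exp (f (p(i := y)))) has_vector_derivative exp (f p) * cm_pd i f p) (at (p i))"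
proof -
  have d: "(exp has_field_derivative exp (f p)) (at (f (p(i := p i))))"
    using DERIV_exp[of "f p"] by simp
  have "((exp \<circ> (\<lambda>y. f (p(i := y)))) has_vector_derivative cm_pd i f p * exp (f p)) (at (p i))"
    by (rule field_vector_diff_chain_at[OF has_vector_derivative_cm_pd[OF assms] d])
  then show ?thesis by (simp add: o_def mult.commute)
qed

lemma has_vector_derivative_inverse_partial:
  assumes "partially_differentiable f" "\<And>p. f p \<noteq> 0"
  shows "((\<lambda>y. inverse (f (p(i := y)))) has_vector_derivative
           - (cm_pd i f p * (inverse (f p) * inverse (f p)))) (at (p i))"
proof -
  have d: "(inverse has_field_derivative - (inverse (f p) ^ 2)) (at (f (p(i := p i))))"
    using DERIV_inverse[OF assms(2)[of p]] by (simp add: power2_eq_square)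
  have "((inverse \<circ> (\<lambda>y. f (p(i := y)))) has_vector_derivative
          cm_pd i f p * (- (inverse (f p) ^ 2))) (at (p i))"
    by (rule field_vector_diff_chain_at[OF has_vector_derivative_cm_pd[OF assms(1)] d])
  then show ?thesis by (simp add: o_def power2_eq_square)
qed

lemma cm_pd_exp:
  assumes "partially_differentiable f"
  shows "cm_pd i (\<lambda>p. exp (f p)) = (\<lambda>p. exp (f p) * cm_pd i f p)"
  by (rule cm_pd_eqI, rule has_vector_derivative_exp_partial[OF assms])

lemma cm_pd_inverse:
  assumes "partially_differentiable f" "\<And>p. f p \<noteq> 0"
  shows "cm_pd i (\<lambda>p. inverse (f p)) = (\<lambda>p. - (cm_pd i f p * (inverse (f p) * inverse (f p))))"
  by (rule cm_pd_eqI, rule has_vector_derivative_inverse_partial[OF assms])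

lemma cm_smooth_partially_differentiable: "cm_smooth f \<Longrightarrow> partially_differentiable f"
  unfolding cm_smooth_def partially_differentiable_def using cm_iter_pd.simps(1) by metis

lemma cm_iter_pd_snoc: "cm_iter_pd (ds @ [i]) f = cm_iter_pd ds (cm_pd i f)"
  by (induction ds) auto

lemma cm_smooth_cm_pd: "cm_smooth f \<Longrightarrow> cm_smooth (cm_pd i f)"
  unfolding cm_smooth_def by (metis cm_iter_pd_snoc)

lemma cm_smooth_cm_pd_commute: "cm_smooth f \<Longrightarrow> cm_pd i (cm_pd j f) = cm_pd j (cm_pd i f)"
  unfolding cm_smooth_def by (metis cm_iter_pd.simps(1))

text \<open>Smoothness quantifies over all iterated derivatives, so its closure under arithmetic and
  \<open>exp\<close> is proved for the generated class at once: that class is stable under \<^const>\<open>cm_pd\<close>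
  and has commuting partial derivatives.\<close>

inductive_set smooth_closure :: "coef set" where
  sc_base: "cm_smooth f \<Longrightarrow> f \<in> smooth_closure"
| sc_const: "(\<lambda>p. c) \<in> smooth_closure"
| sc_add: "f \<in> smooth_closure \<Longrightarrow> g \<in> smooth_closure \<Longrightarrow> (\<lambda>p. f p + g p) \<in> smooth_closure"
| sc_mult: "f \<in> smooth_closure \<Longrightarrow> g \<in> smooth_closure \<Longrightarrow> (\<lambda>p. f p * g p) \<in> smooth_closure"
| sc_exp: "f \<in> smooth_closure \<Longrightarrow> (\<lambda>p. exp (f p)) \<in> smooth_closure"
| sc_inverse: "f \<in> smooth_closure \<Longrightarrow> (\<And>p. f p \<noteq> 0) \<Longrightarrow> (\<lambda>p. inverse (f p)) \<in> smooth_closure"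

lemma smooth_closure_partially_differentiable:
  "f \<in> smooth_closure \<Longrightarrow> partially_differentiable f"
proof (induction rule: smooth_closure.induct)
  case (sc_base f)
  then show ?case by (rule cm_smooth_partially_differentiable)
next
  case (sc_const c)
  then show ?case unfolding partially_differentiable_def by simp
next
  case (sc_add f g)
  show ?case unfolding partially_differentiable_def
  proof (intro allI)
    fix i p
    show "(\<lambda>y. f (p(i := y)) + g (p(i := y))) differentiable at (p i)"
      using has_vector_derivative_add[OF has_vector_derivative_cm_pd[OF sc_add.IH(1), of p i]
          has_vector_derivative_cm_pd[OF sc_add.IH(2), of p i]]
      by (rule differentiableI_vector)
  qed
next
  case (sc_mult f g)
  show ?case unfolding partially_differentiable_def
  proof (intro allI)
    fix i p
    show "(\<lambda>y. f (p(i := y)) * g (p(i := y))) differentiable at (p i)"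
      using has_vector_derivative_mult[OF has_vector_derivative_cm_pd[OF sc_mult.IH(1), of p i]
          has_vector_derivative_cm_pd[OF sc_mult.IH(2), of p i]]
      by (rule differentiableI_vector)
  qed
next
  case (sc_exp f)
  show ?case unfolding partially_differentiable_def
    by (intro allI differentiableI_vector[OF has_vector_derivative_exp_partial[OF sc_exp.IH]])
next
  case (sc_inverse f)
  show ?case unfolding partially_differentiable_def
    using has_vector_derivative_inverse_partial[OF sc_inverse(3,2)]
    by (blast intro: differentiableI_vector)
qed

lemma smooth_closure_minus: "f \<in> smooth_closure \<Longrightarrow> (\<lambda>p. - f p) \<in> smooth_closure"
  using sc_mult[OF sc_const[of "-1"]] by simp

lemmas smooth_closure_intros = smooth_closure.intros smooth_closure_minus

lemma smooth_closure_cm_pd: "f \<in> smooth_closure \<Longrightarrow> cm_pd i f \<in> smooth_closure"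
proof (induction rule: smooth_closure.induct)
  case (sc_base f)
  then show ?case by (intro smooth_closure.sc_base cm_smooth_cm_pd)
next
  case (sc_const c)
  then show ?case by (simp add: smooth_closure.sc_const)
next
  case (sc_add f g)
  then show ?case by (simp add: cm_pd_add smooth_closure_partially_differentiable
      smooth_closure_intros)
next
  case (sc_mult f g)
  then show ?case by (simp add: cm_pd_mult smooth_closure_partially_differentiable
      smooth_closure_intros)
next
  case (sc_exp f)
  then show ?case by (simp add: cm_pd_exp smooth_closure_partially_differentiable
      smooth_closure_intros)
next
  case (sc_inverse f)
  then show ?case
    by (simp add: cm_pd_inverse smooth_closure_partially_differentiable smooth_closure_intros)
qed

lemma smooth_closure_cm_pd_commute:
  "f \<in> smooth_closure \<Longrightarrow> cm_pd i (cm_pd j f) = cm_pd j (cm_pd i f)"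
proof (induction rule: smooth_closure.induct)
  case (sc_base f)
  then show ?case by (rule cm_smooth_cm_pd_commute)
next
  case (sc_const c)
  then show ?case by simp
next
  case (sc_add f g)
  then show ?case
    by (simp add: cm_pd_add smooth_closure_partially_differentiable smooth_closure_cm_pd)
next
  case (sc_mult f g)
  have "cm_pd i (cm_pd j (\<lambda>p. f p * g p)) = (\<lambda>p. f p * cm_pd i (cm_pd j g) p
          + cm_pd i f p * cm_pd j g p + (cm_pd j f p * cm_pd i g p + cm_pd i (cm_pd j f) p * g p))"
    for i j
    using sc_mult.hyps
    by (simp add: cm_pd_mult cm_pd_add smooth_closure_partially_differentiable
        smooth_closure_cm_pd smooth_closure_intros)
  then show ?case using sc_mult.IH by (simp add: algebra_simps)
next
  case (sc_exp f)
  have "cm_pd i (cm_pd j (\<lambda>p. exp (f p))) = (\<lambda>p. exp (f p) * cm_pd i (cm_pd j f) p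
          + exp (f p) * cm_pd i f p * cm_pd j f p)" for i j
    using sc_exp.hyps
    by (simp add: cm_pd_mult cm_pd_exp smooth_closure_partially_differentiable
        smooth_closure_cm_pd smooth_closure_intros algebra_simps)
  then show ?case using sc_exp.IH by (simp add: algebra_simps)
next
  case (sc_inverse f)
  have "cm_pd i (cm_pd j (\<lambda>p. inverse (f p))) = (\<lambda>p. - (cm_pd i (cm_pd j f) p * inverse (f p) ^ 2)
          + 2 * cm_pd i f p * cm_pd j f p * inverse (f p) ^ 3)" for i j
    using sc_inverse.hyps
    by (simp add: cm_pd_inverse cm_pd_minus cm_pd_mult smooth_closure_partially_differentiable
        smooth_closure_cm_pd smooth_closure_intros algebra_simps power2_eq_square power3_eq_cube)
  then show ?case using sc_inverse.IH by (simp add: algebra_simps)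
qed

lemma smooth_closure_cm_iter_pd: "f \<in> smooth_closure \<Longrightarrow> cm_iter_pd ds f \<in> smooth_closure"
  by (induction ds) (auto intro: smooth_closure_cm_pd)

lemma smooth_closure_iff: "f \<in> smooth_closure \<longleftrightarrow> cm_smooth f"
proof
  assume "f \<in> smooth_closure"
  then show "cm_smooth f"
    unfolding cm_smooth_def
    using smooth_closure_cm_iter_pd smooth_closure_partially_differentiable
      smooth_closure_cm_pd_commute
    by (auto simp: partially_differentiable_def)
qed (rule sc_base)

lemma cm_smooth_const [simp]: "cm_smooth (\<lambda>p. c)"
  using sc_const smooth_closure_iff by blast

lemma cm_smooth_add [intro]: "cm_smooth f \<Longrightarrow> cm_smooth g \<Longrightarrow> cm_smooth (\<lambda>p. f p + g p)"
  using sc_add smooth_closure_iff by blast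

lemma cm_smooth_mult [intro]: "cm_smooth f \<Longrightarrow> cm_smooth g \<Longrightarrow> cm_smooth (\<lambda>p. f p * g p)"
  using sc_mult smooth_closure_iff by blast

lemma cm_smooth_exp [intro]: "cm_smooth f \<Longrightarrow> cm_smooth (\<lambda>p. exp (f p))"
  using sc_exp smooth_closure_iff by blast

lemma cm_smooth_inverse [intro]:
  "cm_smooth f \<Longrightarrow> (\<And>p. f p \<noteq> 0) \<Longrightarrow> cm_smooth (\<lambda>p. inverse (f p))"
  using sc_inverse smooth_closure_iff by blast

lemma cm_smooth_minus [intro]: "cm_smooth f \<Longrightarrow> cm_smooth (\<lambda>p. - f p)"
  using smooth_closure_minus smooth_closure_iff by blast

lemma cm_smooth_diff [intro]: "cm_smooth f \<Longrightarrow> cm_smooth g \<Longrightarrow> cm_smooth (\<lambda>p. f p - g p)"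
  using cm_smooth_add[of f "\<lambda>p. - g p"] cm_smooth_minus by simp

lemma cm_smooth_cmult [intro]: "cm_smooth f \<Longrightarrow> cm_smooth (\<lambda>p. c * f p)"
  using cm_smooth_mult[OF cm_smooth_const] by blast

lemma cm_smooth_divide [intro]:
  "cm_smooth f \<Longrightarrow> cm_smooth g \<Longrightarrow> (\<And>p. g p \<noteq> 0) \<Longrightarrow> cm_smooth (\<lambda>p. f p / g p)"
  using cm_smooth_mult[OF _ cm_smooth_inverse[of g]] by (simp add: divide_inverse)

lemma cm_smooth_sum [intro]:
  "(\<And>x. x \<in> S \<Longrightarrow> cm_smooth (F x)) \<Longrightarrow> cm_smooth (\<lambda>p. \<Sum>x\<in>S. F x p)"
  by (induction S rule: infinite_finite_induct) auto

lemma cm_pd_sum: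
  "(\<And>x. x \<in> S \<Longrightarrow> cm_smooth (F x)) \<Longrightarrow>
     cm_pd i (\<lambda>p. \<Sum>x\<in>S. F x p) = (\<lambda>p. \<Sum>x\<in>S. cm_pd i (F x) p)"
  by (induction S rule: infinite_finite_induct)
    (simp_all add: cm_pd_add cm_smooth_sum cm_smooth_partially_differentiable)

abbreviation dx :: "nat \<Rightarrow> coef \<Rightarrow> coef" where
  "dx k f \<equiv> (cm_pd 0 ^^ k) f"

lemma dx_Suc: "dx (Suc k) f = dx k (cm_pd 0 f)"
  by (simp only: funpow_Suc_right o_apply)

lemma dx_zero [simp]: "dx k (\<lambda>p. 0) = (\<lambda>p. 0)"
  by (induction k) auto

lemma dx_const: "k > 0 \<Longrightarrow> dx k (\<lambda>p. c) = (\<lambda>p. 0)"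
  by (cases k) (simp_all only: dx_Suc cm_pd_const dx_zero)

lemma cm_smooth_dx [intro]: "cm_smooth f \<Longrightarrow> cm_smooth (dx k f)"
  by (induction k) (auto intro: cm_smooth_cm_pd)

lemma dx_add:
  "cm_smooth f \<Longrightarrow> cm_smooth g \<Longrightarrow> dx k (\<lambda>p. f p + g p) = (\<lambda>p. dx k f p + dx k g p)"
  by (induction k) (simp_all add: cm_pd_add cm_smooth_partially_differentiable cm_smooth_dx)

lemma dx_cmult: "cm_smooth f \<Longrightarrow> dx k (\<lambda>p. c * f p) = (\<lambda>p. c * dx k f p)"
  by (induction k) (simp_all add: cm_pd_cmult cm_smooth_partially_differentiable cm_smooth_dx)

lemma dx_sum:
  "(\<And>x. x \<in> S \<Longrightarrow> cm_smooth (F x)) \<Longrightarrow> dx k (\<lambda>p. \<Sum>x\<in>S. F x p) = (\<lambda>p. \<Sum>x\<in>S. dx k (F x) p)"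
  by (induction S rule: infinite_finite_induct) (simp_all add: dx_add cm_smooth_sum)

lemma cm_pd_dx_commute: "cm_smooth f \<Longrightarrow> cm_pd n (dx k f) = dx k (cm_pd n f)"
  by (induction k) (simp_all add: cm_smooth_cm_pd_commute cm_smooth_dx)

lemma leibniz_sum_Suc:
  fixes F G :: "nat \<Rightarrow> complex"
  shows "(\<Sum>a\<le>k. of_nat (k choose a) * (F a * G (Suc (k - a)) + F (Suc a) * G (k - a)))
       = (\<Sum>a\<le>Suc k. of_nat (Suc k choose a) * F a * G (Suc k - a))"
proof -
  let ?S1 = "(\<Sum>a\<le>k. of_nat (k choose a) * F (Suc a) * G (k - a))"
  let ?S2 = "(\<Sum>a\<le>k. of_nat (k choose Suc a) * F (Suc a) * G (k - a))"
  let ?T = "(\<Sum>a\<le>k. of_nat (k choose a) * F a * G (Suc (k - a)))"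
  have "(\<Sum>a\<le>Suc k. of_nat (Suc k choose a) * F a * G (Suc k - a)) = F 0 * G (Suc k) + ?S1 + ?S2"
    by (subst sum.atMost_Suc_shift) (simp add: sum.distrib algebra_simps)
  moreover have "(\<Sum>a\<le>Suc k. of_nat (k choose a) * F a * G (Suc k - a)) = F 0 * G (Suc k) + ?S2"
    by (subst sum.atMost_Suc_shift) simp
  moreover have "(\<Sum>a\<le>Suc k. of_nat (k choose a) * F a * G (Suc k - a)) = ?T"
    by (simp add: Suc_diff_le)
  moreover have "(\<Sum>a\<le>k. of_nat (k choose a) * (F a * G (Suc (k - a)) + F (Suc a) * G (k - a)))
      = ?T + ?S1"
    by (simp add: sum.distrib algebra_simps)
  ultimately show ?thesis by simp
qed

lemma dx_mult:
  assumes "cm_smooth f" "cm_smooth g"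
  shows "dx k (\<lambda>p. f p * g p) = (\<lambda>p. \<Sum>a\<le>k. of_nat (k choose a) * dx a f p * dx (k - a) g p)"
proof (induction k)
  case 0
  then show ?case by simp
next
  case (Suc k)
  have step: "cm_pd 0 (\<lambda>p. of_nat (k choose a) * dx a f p * dx (k - a) g p) =
      (\<lambda>p. of_nat (k choose a)
          * (dx a f p * dx (Suc (k - a)) g p + dx (Suc a) f p * dx (k - a) g p))"
    for a
    using cm_pd_cmult[of "\<lambda>p. dx a f p * dx (k - a) g p" 0 "of_nat (k choose a)"] assms
    by (simp add: mult.assoc cm_pd_mult cm_smooth_partially_differentiable cm_smooth_dx
        cm_smooth_mult)
  have "dx (Suc k) (\<lambda>p. f p * g p)
      = cm_pd 0 (\<lambda>p. \<Sum>a\<le>k. of_nat (k choose a) * dx a f p * dx (k - a) g p)"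
    using Suc by simp
  also have "\<dots> = (\<lambda>p. \<Sum>a\<le>k. of_nat (k choose a) *
                     (dx a f p * dx (Suc (k - a)) g p + dx (Suc a) f p * dx (k - a) g p))"
    using assms by (subst cm_pd_sum) (simp_all add: cm_smooth_mult cm_smooth_dx step)
  also have "\<dots> = (\<lambda>p. \<Sum>a\<le>Suc k. of_nat (Suc k choose a) * dx a f p * dx (Suc k - a) g p)"
    by (rule ext, rule leibniz_sum_Suc)
  finally show ?case .
qed

lemma Sum_any_const_mult:
  fixes c :: "'a :: semiring_no_zero_divisors"
  shows "Sum_any (\<lambda>x. c * f x) = c * Sum_any f"
proof (cases "c = 0")
  case True then show ?thesis by simp
next
  case False
  then have "{x. c * f x \<noteq> 0} = {x. f x \<noteq> 0}" by auto
  then show ?thesis by (simp add: Sum_any.expand_set sum_distrib_left)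
qed

lemma Sum_any_mult_const:
  fixes c :: "'a :: semiring_no_zero_divisors"
  shows "Sum_any (\<lambda>x. f x * c) = Sum_any f * c"
proof (cases "c = 0")
  case True then show ?thesis by simp
next
  case False
  then have "{x. f x * c \<noteq> 0} = {x. f x \<noteq> 0}" by auto
  then show ?thesis by (simp add: Sum_any.expand_set sum_distrib_right)
qed

lemma Sum_any_eq_sum:
  "finite X \<Longrightarrow> (\<And>x. x \<notin> X \<Longrightarrow> f x = 0) \<Longrightarrow> Sum_any f = sum f X"
  by (rule Sum_any.expand_superset) auto

lemma Sum_any_Sum_any:
  assumes "finite X" "\<And>a b. g a b \<noteq> 0 \<Longrightarrow> (a, b) \<in> X"
  shows "Sum_any (\<lambda>a. Sum_any (g a)) = Sum_any (\<lambda>(a, b). g a b)"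
proof (rule Sum_any.cartesian_product[of "fst ` X \<times> snd ` X"])
  show "finite (fst ` X \<times> snd ` X)" using assms(1) by simp
  show "{a. \<exists>b. g a b \<noteq> 0} \<times> {b. \<exists>a. g a b \<noteq> 0} \<subseteq> fst ` X \<times> snd ` X"
    using assms(2) by (force simp: image_iff)
qed

lemma Sum_any_reindex_inj:
  assumes "inj h" "\<And>x. x \<notin> range h \<Longrightarrow> F x = 0"
  shows "Sum_any F = Sum_any (F \<circ> h)"
proof -
  have "x \<in> h ` {y. (F \<circ> h) y \<noteq> 0}" if "F x \<noteq> 0" for x
  proof -
    from assms(2) that obtain y where "x = h y" by blast
    then show ?thesis using that by auto
  qed
  then have "{x. F x \<noteq> 0} = h ` {y. (F \<circ> h) y \<noteq> 0}"
    by auto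
  moreover have "inj_on h {y. (F \<circ> h) y \<noteq> 0}" using assms(1) by (simp add: inj_on_def inj_def)
  ultimately show ?thesis
    by (simp add: Sum_any.expand_set sum.reindex)
qed

lemma sum_atMost_eq_Sum_any:
  "(\<And>a. a > k \<Longrightarrow> f a = 0) \<Longrightarrow> (\<Sum>a\<le>(k::nat). f a) = Sum_any f"
  by (rule Sum_any_eq_sum[symmetric]) auto

section \<open>Operators of bounded order\<close>

definition vanishes_above :: "mdo \<Rightarrow> int \<Rightarrow> bool" where
  "vanishes_above A N \<longleftrightarrow> (\<forall>m>N. A m = (\<lambda>p. 0))"

definition smooth_mdo :: "mdo \<Rightarrow> bool" where
  "smooth_mdo A \<longleftrightarrow> is_mdo A \<and> (\<forall>m. cm_smooth (A m))"

lemma is_mdo_iff_vanishes_above: "is_mdo A \<longleftrightarrow> (\<exists>N. vanishes_above A N)"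
  unfolding is_mdo_def vanishes_above_def by simp

lemma vanishes_above_cm_ub: "is_mdo A \<Longrightarrow> vanishes_above A (cm_ub A)"
  unfolding is_mdo_def vanishes_above_def cm_ub_def by (rule someI_ex)

lemma vanishes_above_mono: "vanishes_above A N \<Longrightarrow> N \<le> N' \<Longrightarrow> vanishes_above A N'"
  unfolding vanishes_above_def by auto

lemma vanishes_aboveD: "vanishes_above A N \<Longrightarrow> m > N \<Longrightarrow> A m p = 0"
  unfolding vanishes_above_def by auto

lemma vanishes_above_nonzero: "vanishes_above A N \<Longrightarrow> A i p \<noteq> 0 \<Longrightarrow> i \<le> N"
  using vanishes_aboveD by (meson not_le)

lemma vanishes_above_dx_nonzero:
  "vanishes_above A N \<Longrightarrow> dx k (A i) p \<noteq> 0 \<Longrightarrow> i \<le> N"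
  unfolding vanishes_above_def by (metis dx_zero not_le)

definition mul_term :: "mdo \<Rightarrow> mdo \<Rightarrow> int \<Rightarrow> (nat \<Rightarrow> real) \<Rightarrow> int \<times> nat \<Rightarrow> complex" where
  "mul_term A B m p =
     (\<lambda>(i, k). ((of_int i :: complex) gchoose k) * A i p * dx k (B (m - i + int k)) p)"

lemma sum_box_eq_Sum_any:
  fixes T :: "int \<times> nat \<Rightarrow> 'a :: comm_monoid_add"
  assumes "\<And>i k. T (i, k) \<noteq> 0 \<Longrightarrow> i \<le> NA \<and> m - i + int k \<le> NB"
  shows "(\<Sum>i\<in>{m - NB..NA}. \<Sum>k\<in>{0..nat (NA + NB - m)}. T (i, k)) = Sum_any T"
proof -
  have "Sum_any T = sum T ({m - NB..NA} \<times> {0..nat (NA + NB - m)})"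
  proof (rule Sum_any_eq_sum)
    fix x assume x: "x \<notin> {m - NB..NA} \<times> {0..nat (NA + NB - m)}"
    obtain i k where ik: "x = (i, k)" by force
    show "T x = 0"
    proof (rule ccontr)
      assume "T x \<noteq> 0"
      then have "i \<le> NA \<and> m - i + int k \<le> NB" using assms ik by blast
      then show False using x ik by auto
    qed
  qed simp
  then show ?thesis by (simp add: sum.cartesian_product)
qed

lemma mul_term_nonzero:
  assumes "vanishes_above A NA" "vanishes_above B NB" "mul_term A B m p (i, k) \<noteq> 0"
  shows "i \<le> NA \<and> m - i + int k \<le> NB"
  using assms vanishes_above_nonzero[OF assms(1)] vanishes_above_dx_nonzero[OF assms(2)]
  by (fastforce simp: mul_term_def)

lemma cm_mul_Sum_any:
  assumes "is_mdo A" "is_mdo B"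
  shows "cm_mul A B m p = Sum_any (mul_term A B m p)"
proof -
  have "(\<Sum>i\<in>{m - cm_ub B..cm_ub A}. \<Sum>k\<in>{0..nat (cm_ub A + cm_ub B - m)}.
          mul_term A B m p (i, k)) = Sum_any (mul_term A B m p)"
    by (rule sum_box_eq_Sum_any)
      (rule mul_term_nonzero[OF vanishes_above_cm_ub[OF assms(1)]
          vanishes_above_cm_ub[OF assms(2)]])
  then show ?thesis by (simp add: cm_mul_def mul_term_def)
qed

lemma cm_mul_sum_box:
  assumes "vanishes_above A NA" "vanishes_above B NB" "is_mdo A" "is_mdo B"
  shows "cm_mul A B m p = (\<Sum>i\<in>{m - NB..NA}. \<Sum>k\<in>{0..nat (NA + NB - m)}. mul_term A B m p (i, k))"
  unfolding cm_mul_Sum_any[OF assms(3,4)]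
  by (rule sum_box_eq_Sum_any[symmetric]) (rule mul_term_nonzero[OF assms(1,2)])

lemma vanishes_above_cm_mul:
  assumes "vanishes_above A NA" "vanishes_above B NB" "is_mdo A" "is_mdo B"
  shows "vanishes_above (cm_mul A B) (NA + NB)"
  unfolding vanishes_above_def using cm_mul_sum_box[OF assms] by (auto intro!: ext)

lemma cm_mul_leading:
  assumes "vanishes_above A NA" "vanishes_above B NB" "is_mdo A" "is_mdo B"
  shows "cm_mul A B (NA + NB) p = A NA p * B NB p"
  using cm_mul_sum_box[OF assms, of "NA + NB" p] by (simp add: mul_term_def)

lemma is_mdo_cm_mul: "is_mdo A \<Longrightarrow> is_mdo B \<Longrightarrow> is_mdo (cm_mul A B)"
  using vanishes_above_cm_mul vanishes_above_cm_ub is_mdo_iff_vanishes_above by blast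

lemma cm_smooth_cm_mul:
  assumes "smooth_mdo A" "smooth_mdo B"
  shows "cm_smooth (cm_mul A B m)"
  using assms unfolding smooth_mdo_def cm_mul_def
  by (intro cm_smooth_sum cm_smooth_mult cm_smooth_const cm_smooth_dx) auto

lemma smooth_mdo_cm_mul: "smooth_mdo A \<Longrightarrow> smooth_mdo B \<Longrightarrow> smooth_mdo (cm_mul A B)"
  using cm_smooth_cm_mul is_mdo_cm_mul by (simp add: smooth_mdo_def)

text \<open>Associativity is proved by expanding both \<open>(A B) C\<close> and \<open>A (B C)\<close> into the same
  finitely supported sum of \<^term>\<open>mul3_term\<close>s.  On the left this is a reindexing; on the right
  the Leibniz rule produces an extra summation index, which the Vandermonde identity for
  \<open>gchoose\<close> removes.\<close>

definition mul3_term ::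
  "mdo \<Rightarrow> mdo \<Rightarrow> mdo \<Rightarrow> int \<Rightarrow> (nat \<Rightarrow> real) \<Rightarrow> int \<times> nat \<times> int \<times> nat \<Rightarrow> complex" where
  "mul3_term A B C m p = (\<lambda>(i, a, j, l).
     ((of_int i :: complex) gchoose a) * ((of_int (i + j - int a) :: complex) gchoose l)
     * A i p * dx a (B j) p * dx l (C (m - i - j + int a + int l)) p)"

lemma cm_mul_cm_mul_left_Sum_any:
  assumes "smooth_mdo A" "smooth_mdo B" "smooth_mdo C"
  shows "cm_mul (cm_mul A B) C m p = Sum_any (\<lambda>((r, l), ik).
           ((of_int r :: complex) gchoose l) * mul_term A B r p ik * dx l (C (m - r + int l)) p)"
    (is "_ = Sum_any ?F")
proof -
  obtain NA NB NC where bA: "vanishes_above A NA" and bB: "vanishes_above B NB"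
    and bC: "vanishes_above C NC"
    using assms vanishes_above_cm_ub smooth_mdo_def by metis
  have mA: "is_mdo A" and mB: "is_mdo B" and mC: "is_mdo C"
    using assms smooth_mdo_def by auto
  have "mul_term (cm_mul A B) C m p rl = Sum_any (\<lambda>ik. ?F (rl, ik))" for rl
    using cm_mul_Sum_any[OF mA mB]
    by (cases rl) (simp add: mul_term_def Sum_any_const_mult Sum_any_mult_const)
  then have "cm_mul (cm_mul A B) C m p = Sum_any (\<lambda>rl. Sum_any (\<lambda>ik. ?F (rl, ik)))"
    using cm_mul_Sum_any[OF is_mdo_cm_mul[OF mA mB] mC] by simp
  also have "\<dots> = Sum_any (\<lambda>(rl, ik). ?F (rl, ik))"
  proof (rule Sum_any_Sum_any)
    let ?K = "nat (NA + NB + NC - m)"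
    show "finite (({m - NC..NA + NB} \<times> {0..?K}) \<times> ({m - NB - NC..NA} \<times> {0..?K}))" by simp
    fix rl ik assume nz: "?F (rl, ik) \<noteq> 0"
    obtain r l i k where rl: "rl = (r, l)" and ik: "ik = (i, k)" by force
    have "i \<le> NA" "r - i + int k \<le> NB" "m - r + int l \<le> NC"
      using nz vanishes_above_nonzero[OF bA] vanishes_above_dx_nonzero[OF bB]
        vanishes_above_dx_nonzero[OF bC]
      unfolding rl ik mul_term_def by fastforce+
    then show "(rl, ik) \<in> ({m - NC..NA + NB} \<times> {0..?K}) \<times> ({m - NB - NC..NA} \<times> {0..?K})"
      unfolding rl ik by auto
  qed
  finally show ?thesis by (simp add: case_prod_beta')
qed

lemma cm_mul_assoc_left_Sum_any:
  assumes "smooth_mdo A" "smooth_mdo B" "smooth_mdo C"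
  shows "cm_mul (cm_mul A B) C m p = Sum_any (mul3_term A B C m p)"
proof -
  define h :: "int \<times> nat \<times> int \<times> nat \<Rightarrow> (int \<times> nat) \<times> (int \<times> nat)" where
    "h = (\<lambda>(i, k, j, l). ((i + j - int k, l), (i, k)))"
  have "bij h"
    by (rule o_bij[of "\<lambda>((r, l), (i, k)). (i, k, r - i + int k, l)"]) (auto simp: h_def fun_eq_iff)
  then show ?thesis
    unfolding cm_mul_cm_mul_left_Sum_any[OF assms]
    by (rule Sum_any.reindex_cong) (auto simp: h_def mul_term_def mul3_term_def fun_eq_iff
        algebra_simps)
qed

lemma dx_coeff_term:
  assumes "cm_smooth f" "cm_smooth g"
  shows "dx k (\<lambda>p. c * f p * dx q g p) p
       = c * Sum_any (\<lambda>a. of_nat (k choose a) * dx a f p * dx (k - a + q) g p)"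
proof -
  have "dx k (\<lambda>p. c * f p * dx q g p) = dx k (\<lambda>p. c * (f p * dx q g p))" by (simp add: mult.assoc)
  also have "\<dots> = (\<lambda>p. c * dx k (\<lambda>p. f p * dx q g p) p)"
    using assms by (intro dx_cmult cm_smooth_mult cm_smooth_dx)
  finally have "dx k (\<lambda>p. c * f p * dx q g p) p
      = c * (\<Sum>a\<le>k. of_nat (k choose a) * dx a f p * dx (k - a) (dx q g) p)"
    using dx_mult[of f "dx q g" k] assms by (simp add: cm_smooth_dx)
  also have "\<dots> = c * (\<Sum>a\<le>k. of_nat (k choose a) * dx a f p * dx (k - a + q) g p)"
  proof -
    have "dx (k - a + q) g = dx (k - a) (dx q g)" for a by (simp only: funpow_add o_apply)
    then show ?thesis by (simp only:)
  qed
  also have "\<dots> = c * Sum_any (\<lambda>a. of_nat (k choose a) * dx a f p * dx (k - a + q) g p)"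
    by (subst sum_atMost_eq_Sum_any) auto
  finally show ?thesis .
qed

lemma dx_cm_mul:
  assumes "smooth_mdo B" "smooth_mdo C"
  shows "dx k (cm_mul B C n) p = Sum_any (\<lambda>(j, q). ((of_int j :: complex) gchoose q) *
     Sum_any (\<lambda>a. of_nat (k choose a) * dx a (B j) p * dx (k - a + q) (C (n - j + int q)) p))"
proof -
  define NB where "NB = cm_ub B"
  define NC where "NC = cm_ub C"
  have bB: "vanishes_above B NB" and bC: "vanishes_above C NC"
    and sB: "\<And>j. cm_smooth (B j)" and sC: "\<And>j. cm_smooth (C j)"
    using assms vanishes_above_cm_ub smooth_mdo_def NB_def NC_def by auto
  have eq: "cm_mul B C n = (\<lambda>p. \<Sum>j\<in>{n - NC..NB}. \<Sum>q\<in>{0..nat (NB + NC - n)}.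
       ((of_int j :: complex) gchoose q) * B j p * dx q (C (n - j + int q)) p)"
    unfolding cm_mul_def NB_def NC_def by simp
  have "dx k (cm_mul B C n) p = (\<Sum>j\<in>{n - NC..NB}. \<Sum>q\<in>{0..nat (NB + NC - n)}.
       dx k (\<lambda>p. ((of_int j :: complex) gchoose q) * B j p * dx q (C (n - j + int q)) p) p)"
    unfolding eq using sB sC
    by (simp add: dx_sum cm_smooth_sum cm_smooth_mult cm_smooth_dx)
  also have "\<dots> = (\<Sum>j\<in>{n - NC..NB}. \<Sum>q\<in>{0..nat (NB + NC - n)}.
       (\<lambda>(j, q). ((of_int j :: complex) gchoose q) *
     Sum_any (\<lambda>a. of_nat (k choose a) * dx a (B j) p * dx (k - a + q) (C (n - j + int q)) p))
         (j, q))"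
    by (simp add: dx_coeff_term sB sC)
  also have "\<dots> = Sum_any (\<lambda>(j, q). ((of_int j :: complex) gchoose q) *
     Sum_any (\<lambda>a. of_nat (k choose a) * dx a (B j) p * dx (k - a + q) (C (n - j + int q)) p))"
  proof (rule sum_box_eq_Sum_any)
    fix j q assume "(\<lambda>(j, q). ((of_int j :: complex) gchoose q) *
     Sum_any (\<lambda>a. of_nat (k choose a) * dx a (B j) p * dx (k - a + q) (C (n - j + int q)) p))
         (j, q) \<noteq> 0"
    then have "Sum_any (\<lambda>a. of_nat (k choose a) * dx a (B j) p
        * dx (k - a + q) (C (n - j + int q)) p) \<noteq> 0"
      by auto
    then obtain a where "of_nat (k choose a) * dx a (B j) p
        * dx (k - a + q) (C (n - j + int q)) p \<noteq> 0"
      by (rule Sum_any.not_neutral_obtains_not_neutral)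
    then show "j \<le> NB \<and> n - j + int q \<le> NC"
      using vanishes_above_dx_nonzero[OF bB] vanishes_above_dx_nonzero[OF bC] by fastforce
  qed
  finally show ?thesis .
qed

lemma gchoose_trinomial_Vandermonde:
  fixes x y :: "'a :: field_char_0"
  shows "(\<Sum>t\<le>l. (x gchoose (a + t)) * of_nat ((a + t) choose a) * (y gchoose (l - t)))
       = (x gchoose a) * ((x + y - of_nat a) gchoose l)"
proof -
  have "(x gchoose (a + t)) * of_nat ((a + t) choose a)
      = (x gchoose a) * ((x - of_nat a) gchoose t)"
    for t
    using gbinomial_trinomial_revision[of a "a + t" x] by (simp add: binomial_gbinomial)
  then have "(\<Sum>t\<le>l. (x gchoose (a + t)) * of_nat ((a + t) choose a) * (y gchoose (l - t)))
      = (x gchoose a) * (\<Sum>t\<in>{0..l}. ((x - of_nat a) gchoose t) * (y gchoose (l - t)))"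
    by (simp add: sum_distrib_left mult.assoc atLeast0AtMost)
  also have "\<dots> = (x gchoose a) * ((x - of_nat a + y) gchoose l)"
    by (simp only: gbinomial_Vandermonde)
  finally show ?thesis by (simp add: algebra_simps)
qed

definition right_assoc_term ::
  "mdo \<Rightarrow> mdo \<Rightarrow> mdo \<Rightarrow> int \<Rightarrow> (nat \<Rightarrow> real) \<Rightarrow> (int \<times> nat) \<times> (int \<times> nat) \<times> nat \<Rightarrow> complex"
  where
  "right_assoc_term A B C m p = (\<lambda>((i, k), (j, q), a).
     ((of_int i :: complex) gchoose k) * A i p * ((of_int j :: complex) gchoose q)
     * of_nat (k choose a) * dx a (B j) p * dx (k - a + q) (C (m - i + int k - j + int q)) p)"

lemma right_assoc_term_nonzero:
  assumes "vanishes_above A NA" "vanishes_above B NB" "vanishes_above C NC"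
    and "right_assoc_term A B C m p ((i, k), (j, q), a) \<noteq> 0"
  shows "i \<le> NA \<and> j \<le> NB \<and> m - i + int k - j + int q \<le> NC \<and> a \<le> k"
  using assms vanishes_above_nonzero[OF assms(1)] vanishes_above_dx_nonzero[OF assms(2)]
    vanishes_above_dx_nonzero[OF assms(3)]
  unfolding right_assoc_term_def by (cases "a \<le> k") fastforce+

lemma mul_term_cm_mul_right:
  assumes "smooth_mdo A" "smooth_mdo B" "smooth_mdo C"
  shows "mul_term A (cm_mul B C) m p (i, k) = Sum_any (\<lambda>x. right_assoc_term A B C m p ((i, k), x))"
proof -
  obtain NA NB NC where bA: "vanishes_above A NA" and bB: "vanishes_above B NB"
    and bC: "vanishes_above C NC"
    using assms vanishes_above_cm_ub smooth_mdo_def by metis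
  have "mul_term A (cm_mul B C) m p (i, k)
      = Sum_any (\<lambda>jq. Sum_any (\<lambda>a. right_assoc_term A B C m p ((i, k), jq, a)))"
    using dx_cm_mul[OF assms(2,3), of k "m - i + int k" p]
    by (simp add: mul_term_def right_assoc_term_def case_prod_beta' algebra_simps
        flip: Sum_any_const_mult)
  also have "\<dots> = Sum_any (\<lambda>(jq, a). right_assoc_term A B C m p ((i, k), jq, a))"
  proof (rule Sum_any_Sum_any)
    let ?S = "({m - i + int k - NC..NB} \<times> {0..nat (NC - m + i + NB)}) \<times> {0..k}"
    show "finite ?S" by simp
    fix jq a assume "right_assoc_term A B C m p ((i, k), jq, a) \<noteq> 0"
    then show "(jq, a) \<in> ?S"
      using right_assoc_term_nonzero[OF bA bB bC] by (cases jq) force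
  qed
  finally show ?thesis by (simp add: case_prod_beta')
qed

lemma cm_mul_cm_mul_right_Sum_any:
  assumes "smooth_mdo A" "smooth_mdo B" "smooth_mdo C"
  shows "cm_mul A (cm_mul B C) m p = Sum_any (right_assoc_term A B C m p)"
proof -
  obtain NA NB NC where bA: "vanishes_above A NA" and bB: "vanishes_above B NB"
    and bC: "vanishes_above C NC"
    using assms vanishes_above_cm_ub smooth_mdo_def by metis
  have "mul_term A (cm_mul B C) m p = (\<lambda>ik. Sum_any (\<lambda>x. right_assoc_term A B C m p (ik, x)))"
    using mul_term_cm_mul_right[OF assms] by (simp add: fun_eq_iff)
  then have "cm_mul A (cm_mul B C) m p
      = Sum_any (\<lambda>ik. Sum_any (\<lambda>x. right_assoc_term A B C m p (ik, x)))"
    using cm_mul_Sum_any[of A "cm_mul B C"] assms is_mdo_cm_mul by (simp add: smooth_mdo_def)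
  also have "\<dots> = Sum_any (\<lambda>(ik, x). right_assoc_term A B C m p (ik, x))"
  proof (rule Sum_any_Sum_any)
    let ?K = "nat (NA + NB + NC - m)"
    let ?S = "({m - NB - NC..NA} \<times> {0..?K}) \<times> (({m - NA - NC..NB} \<times> {0..?K}) \<times> {0..?K})"
    show "finite ?S" by simp
    fix ik x assume nz: "right_assoc_term A B C m p (ik, x) \<noteq> 0"
    obtain i k j q a where "ik = (i, k)" "x = ((j, q), a)" by (metis surj_pair)
    with nz right_assoc_term_nonzero[OF bA bB bC, of m p i k j q a] show "(ik, x) \<in> ?S"
      by auto
  qed
  finally show ?thesis by (simp add: case_prod_beta')
qed

definition vandermonde_term ::
  "mdo \<Rightarrow> mdo \<Rightarrow> mdo \<Rightarrow> int \<Rightarrow> (nat \<Rightarrow> real) \<Rightarrow> (int \<times> nat \<times> int \<times> nat) \<times> nat \<Rightarrow> complex"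
  where
  "vandermonde_term A B C m p = (\<lambda>((i, a, j, l), t).
     if t \<le> l then right_assoc_term A B C m p ((i, a + t), (j, l - t), a) else 0)"

lemma Sum_any_right_assoc_term:
  "Sum_any (right_assoc_term A B C m p) = Sum_any (vandermonde_term A B C m p)"
proof -
  define h1 :: "int \<times> nat \<times> nat \<times> int \<times> nat \<Rightarrow> (int \<times> nat) \<times> (int \<times> nat) \<times> nat" where
    "h1 = (\<lambda>(i, a, t, j, q). ((i, a + t), (j, q), a))"
  define h2 :: "int \<times> nat \<times> nat \<times> int \<times> nat \<Rightarrow> (int \<times> nat \<times> int \<times> nat) \<times> nat" where
    "h2 = (\<lambda>(i, a, t, j, q). ((i, a, j, t + q), t))"
  have "Sum_any (right_assoc_term A B C m p) = Sum_any (right_assoc_term A B C m p \<circ> h1)"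
  proof (rule Sum_any_reindex_inj)
    show "inj h1" unfolding h1_def inj_def by auto
    fix y assume y: "y \<notin> range h1"
    obtain i k j q a where yy: "y = ((i, k), (j, q), a)" by (metis surj_pair)
    have "\<not> a \<le> k"
    proof
      assume "a \<le> k"
      then have "y = h1 (i, a, k - a, j, q)" unfolding yy h1_def by simp
      then show False using y by blast
    qed
    then show "right_assoc_term A B C m p y = 0" unfolding yy right_assoc_term_def by simp
  qed
  also have "right_assoc_term A B C m p \<circ> h1 = vandermonde_term A B C m p \<circ> h2"
    by (auto simp: h1_def h2_def vandermonde_term_def fun_eq_iff)
  also have "Sum_any (vandermonde_term A B C m p \<circ> h2) = Sum_any (vandermonde_term A B C m p)"
  proof (rule Sum_any_reindex_inj[symmetric])
    show "inj h2" unfolding h2_def inj_def by auto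
    fix y assume y: "y \<notin> range h2"
    obtain i a j l t where yy: "y = ((i, a, j, l), t)" by (metis surj_pair)
    have "\<not> t \<le> l"
    proof
      assume "t \<le> l"
      then have "y = h2 (i, a, t, j, l - t)" unfolding yy h2_def by simp
      then show False using y by blast
    qed
    then show "vandermonde_term A B C m p y = 0" unfolding yy vandermonde_term_def by simp
  qed
  finally show ?thesis .
qed

lemma Sum_any_vandermonde_term:
  "Sum_any (\<lambda>t. vandermonde_term A B C m p (x, t)) = mul3_term A B C m p x"
proof -
  obtain i a j l where x: "x = (i, a, j, l)" by (metis surj_pair)
  define R where "R = A i p * dx a (B j) p * dx l (C (m - i - j + int a + int l)) p"
  have "Sum_any (\<lambda>t. vandermonde_term A B C m p (x, t)) = (\<Sum>t\<le>l. vandermonde_term A B C m p (x, t))"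
    by (rule sum_atMost_eq_Sum_any[symmetric]) (simp add: vandermonde_term_def x)
  also have "\<dots> = (\<Sum>t\<le>l. ((of_int i :: complex) gchoose (a + t)) * of_nat ((a + t) choose a)
                          * ((of_int j :: complex) gchoose (l - t))) * R"
    unfolding sum_distrib_right
  proof (rule sum.cong[OF refl])
    fix t assume "t \<in> {..l}"
    then have "a + t - a + (l - t) = l" "m - i + int (a + t) - j + int (l - t)
        = m - i - j + int a + int l"
      by auto
    then show "vandermonde_term A B C m p (x, t) = ((of_int i :: complex) gchoose (a + t))
        * of_nat ((a + t) choose a) * ((of_int j :: complex) gchoose (l - t)) * R"
      using \<open>t \<in> {..l}\<close> unfolding vandermonde_term_def right_assoc_term_def x R_def
      by (simp add: algebra_simps)
  qed
  also have "\<dots> = mul3_term A B C m p x"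
    unfolding gchoose_trinomial_Vandermonde mul3_term_def x R_def by (simp add: algebra_simps)
  finally show ?thesis .
qed

lemma cm_mul_assoc_right_Sum_any:
  assumes "smooth_mdo A" "smooth_mdo B" "smooth_mdo C"
  shows "cm_mul A (cm_mul B C) m p = Sum_any (mul3_term A B C m p)"
proof -
  obtain NA NB NC where bA: "vanishes_above A NA" and bB: "vanishes_above B NB"
    and bC: "vanishes_above C NC"
    using assms vanishes_above_cm_ub smooth_mdo_def by metis
  let ?K = "nat (NA + NB + NC - m)"
  have "Sum_any (vandermonde_term A B C m p)
      = Sum_any (\<lambda>x. Sum_any (\<lambda>t. vandermonde_term A B C m p (x, t)))"
  proof (rule Sum_any_Sum_any[symmetric, where g = "\<lambda>x t. vandermonde_term A B C m p (x, t)",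
        simplified case_prod_beta' prod.collapse])
    show "finite (({m - NB - NC..NA} \<times> {0..?K} \<times> {m - NA - NC..NB} \<times> {0..?K}) \<times> {0..?K})"
      by simp
    fix x t assume "vandermonde_term A B C m p (x, t) \<noteq> 0"
    moreover obtain i a j l where x: "x = (i, a, j, l)" by (metis surj_pair)
    ultimately have "t \<le> l" "right_assoc_term A B C m p ((i, a + t), (j, l - t), a) \<noteq> 0"
      unfolding vandermonde_term_def by (auto split: if_splits)
    then show "(x, t) \<in> ({m - NB - NC..NA} \<times> {0..?K} \<times> {m - NA - NC..NB} \<times> {0..?K}) \<times> {0..?K}"
      using right_assoc_term_nonzero[OF bA bB bC, of m p i "a + t" j "l - t" a] unfolding x by auto
  qed
  then show ?thesis
    by (simp add: cm_mul_cm_mul_right_Sum_any[OF assms] Sum_any_right_assoc_term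
        Sum_any_vandermonde_term)
qed

lemma cm_mul_assoc:
  assumes "smooth_mdo A" "smooth_mdo B" "smooth_mdo C"
  shows "cm_mul (cm_mul A B) C = cm_mul A (cm_mul B C)"
  using cm_mul_assoc_left_Sum_any[OF assms] cm_mul_assoc_right_Sum_any[OF assms] by (intro ext) simp

lemma vanishes_above_mono_max:
  "vanishes_above A N \<Longrightarrow> vanishes_above A (max N M)" "vanishes_above A N
      \<Longrightarrow> vanishes_above A (max M N)"
  using vanishes_above_mono by auto

lemma is_mdo_common_bound:
  assumes "finite S" "\<And>A. A \<in> S \<Longrightarrow> is_mdo A"
  shows "\<exists>N. \<forall>A\<in>S. vanishes_above A N"
  using assms
proof (induction S rule: finite_induct)
  case empty
  then show ?case by simp
next
  case (insert A S)
  then obtain N M where "\<forall>B\<in>S. vanishes_above B N" "vanishes_above A M"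
    by (metis insert_iff is_mdo_iff_vanishes_above)
  then have "\<forall>B\<in>insert A S. vanishes_above B (max N M)"
    by (simp add: vanishes_above_mono_max)
  then show ?case ..
qed

lemma vanishes_above_cm_const: "vanishes_above (cm_const c) 0"
  unfolding vanishes_above_def cm_const_def by auto

lemma is_mdo_cm_const: "is_mdo (cm_const c)"
  using vanishes_above_cm_const is_mdo_iff_vanishes_above by blast

lemma smooth_mdo_cm_const: "cm_smooth c \<Longrightarrow> smooth_mdo (cm_const c)"
  unfolding smooth_mdo_def using is_mdo_cm_const[of c] by (auto simp: cm_const_def)

lemma smooth_mdo_cm_one: "smooth_mdo cm_one"
  unfolding cm_one_def by (rule smooth_mdo_cm_const) simp

lemma smooth_mdo_zero: "smooth_mdo (\<lambda>m p. 0)"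
  unfolding smooth_mdo_def is_mdo_iff_vanishes_above vanishes_above_def by auto

lemma vanishes_above_cm_add:
  "vanishes_above A N \<Longrightarrow> vanishes_above B N \<Longrightarrow> vanishes_above (cm_add A B) N"
  unfolding vanishes_above_def cm_add_def by auto

lemma vanishes_above_cm_sub:
  "vanishes_above A N \<Longrightarrow> vanishes_above B N \<Longrightarrow> vanishes_above (cm_sub A B) N"
  unfolding vanishes_above_def cm_sub_def by auto

lemma is_mdo_cm_add: "is_mdo A \<Longrightarrow> is_mdo B \<Longrightarrow> is_mdo (cm_add A B)"
  using is_mdo_common_bound[of "{A, B}"] vanishes_above_cm_add is_mdo_iff_vanishes_above by auto

lemma is_mdo_cm_sub: "is_mdo A \<Longrightarrow> is_mdo B \<Longrightarrow> is_mdo (cm_sub A B)"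
  using is_mdo_common_bound[of "{A, B}"] vanishes_above_cm_sub is_mdo_iff_vanishes_above by auto

definition cm_neg :: "mdo \<Rightarrow> mdo" where
  "cm_neg A = (\<lambda>m p. - A m p)"

lemma smooth_mdo_cm_add: "smooth_mdo A \<Longrightarrow> smooth_mdo B \<Longrightarrow> smooth_mdo (cm_add A B)"
  using is_mdo_cm_add[of A B] unfolding smooth_mdo_def by (auto simp: cm_add_def)

lemma smooth_mdo_cm_sub: "smooth_mdo A \<Longrightarrow> smooth_mdo B \<Longrightarrow> smooth_mdo (cm_sub A B)"
  using is_mdo_cm_sub[of A B] unfolding smooth_mdo_def by (auto simp: cm_sub_def)

lemma smooth_mdo_cm_neg: "smooth_mdo A \<Longrightarrow> smooth_mdo (cm_neg A)"
  unfolding smooth_mdo_def is_mdo_iff_vanishes_above vanishes_above_def cm_neg_def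
  by (auto simp: fun_eq_iff)

lemma cm_mul_cm_const_left:
  assumes "is_mdo B"
  shows "cm_mul (cm_const c) B = (\<lambda>m p. c p * B m p)"
proof (intro ext)
  fix m p
  have "mul_term (cm_const c) B m p = (\<lambda>x. if x = (0, 0) then c p * B m p else 0)"
  proof
    fix x :: "int \<times> nat"
    obtain i k where x: "x = (i, k)" by force
    show "mul_term (cm_const c) B m p x = (if x = (0, 0) then c p * B m p else 0)"
      unfolding x mul_term_def cm_const_def by (cases k) auto
  qed
  then show "cm_mul (cm_const c) B m p = c p * B m p"
    using cm_mul_Sum_any[OF is_mdo_cm_const assms] by simp
qed

lemma cm_mul_one_left: "is_mdo B \<Longrightarrow> cm_mul cm_one B = B"
  unfolding cm_one_def by (simp add: cm_mul_cm_const_left)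

lemma cm_mul_one_right:
  assumes "is_mdo A"
  shows "cm_mul A cm_one = A"
proof (intro ext)
  fix m p
  have "mul_term A cm_one m p = (\<lambda>x. if x = (m, 0) then A m p else 0)"
  proof
    fix x :: "int \<times> nat"
    obtain i k where x: "x = (i, k)" by force
    show "mul_term A cm_one m p x = (if x = (m, 0) then A m p else 0)"
    proof (cases "k = 0")
      case True then show ?thesis unfolding x mul_term_def cm_one_def cm_const_def by auto
    next
      case False
      then have "dx k (\<lambda>p. 1) = (\<lambda>p. 0)" by (simp add: dx_const)
      then show ?thesis using False unfolding x mul_term_def cm_one_def cm_const_def by auto
    qed
  qed
  then show "cm_mul A cm_one m p = A m p"
    using cm_mul_Sum_any[OF assms is_mdo_cm_const[of "\<lambda>p. 1"]] by (simp add: cm_one_def)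
qed

lemma cm_mul_cm_const_cm_const: "cm_mul (cm_const f) (cm_const g) = cm_const (\<lambda>p. f p * g p)"
  by (simp add: cm_mul_cm_const_left is_mdo_cm_const) (auto simp: cm_const_def)

lemma cm_mul_add_left:
  assumes "is_mdo A" "is_mdo A'" "is_mdo B"
  shows "cm_mul (cm_add A A') B = cm_add (cm_mul A B) (cm_mul A' B)"
proof (intro ext)
  fix m p
  obtain N where N: "vanishes_above A N" "vanishes_above A' N" "vanishes_above B N"
    using is_mdo_common_bound[of "{A, A', B}"] assms by auto
  have m: "is_mdo A" "is_mdo A'" "is_mdo B" "is_mdo (cm_add A A')" using assms is_mdo_cm_add by auto
  have t: "mul_term (cm_add A A') B m p x = mul_term A B m p x + mul_term A' B m p x" for x
    by (cases x) (simp add: mul_term_def cm_add_def algebra_simps)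
  show "cm_mul (cm_add A A') B m p = cm_add (cm_mul A B) (cm_mul A' B) m p"
    unfolding cm_add_def[of "cm_mul A B"]
    unfolding cm_mul_sum_box[OF vanishes_above_cm_add[OF N(1,2)] N(3) m(4,3)]
      cm_mul_sum_box[OF N(1,3) m(1,3)] cm_mul_sum_box[OF N(2,3) m(2,3)]
    by (simp only: t sum.distrib)
qed

lemma cm_mul_sub_left:
  assumes "is_mdo A" "is_mdo A'" "is_mdo B"
  shows "cm_mul (cm_sub A A') B = cm_sub (cm_mul A B) (cm_mul A' B)"
proof (intro ext)
  fix m p
  obtain N where N: "vanishes_above A N" "vanishes_above A' N" "vanishes_above B N"
    using is_mdo_common_bound[of "{A, A', B}"] assms by auto
  have m: "is_mdo A" "is_mdo A'" "is_mdo B" "is_mdo (cm_sub A A')" using assms is_mdo_cm_sub by auto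
  have t: "mul_term (cm_sub A A') B m p x = mul_term A B m p x - mul_term A' B m p x" for x
    by (cases x) (simp add: mul_term_def cm_sub_def algebra_simps)
  show "cm_mul (cm_sub A A') B m p = cm_sub (cm_mul A B) (cm_mul A' B) m p"
    unfolding cm_sub_def[of "cm_mul A B"]
    unfolding cm_mul_sum_box[OF vanishes_above_cm_sub[OF N(1,2)] N(3) m(4,3)]
      cm_mul_sum_box[OF N(1,3) m(1,3)] cm_mul_sum_box[OF N(2,3) m(2,3)]
    by (simp only: t sum_subtractf)
qed

lemma cm_mul_add_right:
  assumes "smooth_mdo A" "smooth_mdo B" "smooth_mdo B'"
  shows "cm_mul A (cm_add B B') = cm_add (cm_mul A B) (cm_mul A B')"
proof (intro ext)
  fix m p
  have m: "is_mdo A" "is_mdo B" "is_mdo B'" "is_mdo (cm_add B B')"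
    using assms smooth_mdo_cm_add smooth_mdo_def by auto
  obtain N where N: "vanishes_above A N" "vanishes_above B N" "vanishes_above B' N"
    using is_mdo_common_bound[of "{A, B, B'}"] m by auto
  have s: "cm_smooth (B j)" "cm_smooth (B' j)" for j using assms smooth_mdo_def by auto
  have d: "dx k (cm_add B B' j) = (\<lambda>p. dx k (B j) p + dx k (B' j) p)" for k j
    unfolding cm_add_def by (rule dx_add[OF s])
  have t: "mul_term A (cm_add B B') m p x = mul_term A B m p x + mul_term A B' m p x" for x
    by (cases x) (simp add: mul_term_def d algebra_simps)
  show "cm_mul A (cm_add B B') m p = cm_add (cm_mul A B) (cm_mul A B') m p"
    unfolding cm_add_def[of "cm_mul A B"]
    unfolding cm_mul_sum_box[OF N(1) vanishes_above_cm_add[OF N(2,3)] m(1,4)]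
      cm_mul_sum_box[OF N(1,2) m(1,2)] cm_mul_sum_box[OF N(1,3) m(1,3)]
    by (simp only: t sum.distrib)
qed

lemma cm_mul_zero_left:
  assumes "is_mdo A"
  shows "cm_mul (\<lambda>m p. 0) A = (\<lambda>m p. 0)"
  using cm_mul_Sum_any[of "\<lambda>m p. 0" A] assms smooth_mdo_zero smooth_mdo_def
  by (auto simp: mul_term_def)

lemma vanishes_above_cm_dop: "vanishes_above A N \<Longrightarrow> vanishes_above (cm_dop n A) N"
  unfolding vanishes_above_def cm_dop_def by simp

lemma smooth_mdo_cm_dop: "smooth_mdo A \<Longrightarrow> smooth_mdo (cm_dop n A)"
  unfolding smooth_mdo_def is_mdo_iff_vanishes_above
  using vanishes_above_cm_dop by (auto simp: cm_dop_def cm_smooth_cm_pd)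

lemma cm_pd_mul_term:
  assumes "smooth_mdo A" "smooth_mdo B"
  shows "cm_pd n (\<lambda>p. mul_term A B m p x)
      = (\<lambda>p. mul_term (cm_dop n A) B m p x + mul_term A (cm_dop n B) m p x)"
proof -
  obtain i k where x: "x = (i, k)" by force
  have sA: "cm_smooth (A i)" and sB: "cm_smooth (B (m - i + int k))" using assms smooth_mdo_def
    by auto
  have "cm_pd n (\<lambda>p. mul_term A B m p x)
      = cm_pd n (\<lambda>p. ((of_int i :: complex) gchoose k) * (A i p * dx k (B (m - i + int k)) p))"
    unfolding x mul_term_def by (simp add: mult.assoc)
  also have "\<dots> = (\<lambda>p. ((of_int i :: complex) gchoose k)
      * cm_pd n (\<lambda>p. A i p * dx k (B (m - i + int k)) p) p)"
    using sA sB by (intro cm_pd_cmult cm_smooth_partially_differentiable cm_smooth_mult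
        cm_smooth_dx)
  also have "\<dots> = (\<lambda>p. ((of_int i :: complex) gchoose k)
      * (A i p * cm_pd n (dx k (B (m - i + int k))) p
        + cm_pd n (A i) p * dx k (B (m - i + int k)) p))"
    using sA sB by (simp add: cm_pd_mult cm_smooth_partially_differentiable cm_smooth_dx)
  also have "\<dots> = (\<lambda>p. mul_term (cm_dop n A) B m p x + mul_term A (cm_dop n B) m p x)"
    unfolding x mul_term_def cm_dop_def using sB by (simp add: cm_pd_dx_commute algebra_simps)
  finally show ?thesis .
qed

lemma cm_smooth_mul_term: "smooth_mdo A \<Longrightarrow> smooth_mdo B \<Longrightarrow> cm_smooth (\<lambda>p. mul_term A B m p x)"
  unfolding mul_term_def smooth_mdo_def by (cases x) (auto intro!: cm_smooth_mult cm_smooth_dx)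

lemma cm_mul_sum_box_fun:
  assumes "vanishes_above A NA" "vanishes_above B NB" "is_mdo A" "is_mdo B"
  shows "cm_mul A B m = (\<lambda>p. \<Sum>i\<in>{m - NB..NA}. \<Sum>k\<in>{0..nat (NA + NB - m)}. mul_term A B m p (i, k))"
  using cm_mul_sum_box[OF assms] by (intro ext) simp

lemma cm_dop_cm_mul:
  assumes "smooth_mdo A" "smooth_mdo B"
  shows "cm_dop n (cm_mul A B) = cm_add (cm_mul (cm_dop n A) B) (cm_mul A (cm_dop n B))"
proof (intro ext)
  fix m p
  have mm: "is_mdo A" "is_mdo B" "is_mdo (cm_dop n A)" "is_mdo (cm_dop n B)"
    using assms smooth_mdo_cm_dop smooth_mdo_def by auto
  obtain N where N: "vanishes_above A N" "vanishes_above B N"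
    using is_mdo_common_bound[of "{A, B}"] mm by auto
  have N': "vanishes_above (cm_dop n A) N" "vanishes_above (cm_dop n B) N"
    using N vanishes_above_cm_dop by auto
  have "cm_dop n (cm_mul A B) m
      = cm_pd n (\<lambda>p. \<Sum>i\<in>{m - N..N}. \<Sum>k\<in>{0..nat (N + N - m)}. mul_term A B m p (i, k))"
    unfolding cm_dop_def cm_mul_sum_box_fun[OF N mm(1,2)] ..
  also have "\<dots> = (\<lambda>p. \<Sum>i\<in>{m - N..N}. \<Sum>k\<in>{0..nat (N + N - m)}. cm_pd n
      (\<lambda>p. mul_term A B m p (i, k)) p)"
    using cm_smooth_mul_term[OF assms] by (simp add: cm_pd_sum cm_smooth_sum)
  also have "\<dots> = (\<lambda>p. \<Sum>i\<in>{m - N..N}. \<Sum>k\<in>{0..nat (N + N - m)}. mul_term (cm_dop n A) B m p (i, k)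
      + mul_term A (cm_dop n B) m p (i, k))"
    by (simp only: cm_pd_mul_term[OF assms])
  also have "\<dots> = cm_add (cm_mul (cm_dop n A) B) (cm_mul A (cm_dop n B)) m"
    unfolding cm_add_def cm_mul_sum_box_fun[OF N'(1) N(2) mm(3,2)]
      cm_mul_sum_box_fun[OF N(1) N'(2) mm(1,4)]
    by (simp add: sum.distrib)
  finally show "cm_dop n (cm_mul A B) m p
      = cm_add (cm_mul (cm_dop n A) B) (cm_mul A (cm_dop n B)) m p" by simp
qed

lemma cm_dop_cm_const: "cm_dop n (cm_const c) = cm_const (cm_pd n c)"
  unfolding cm_dop_def cm_const_def by (intro ext) simp

lemma vanishes_above_cm_proj: "vanishes_above A N \<Longrightarrow> vanishes_above (cm_proj A) N"
  unfolding vanishes_above_def cm_proj_def by simp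

lemma smooth_mdo_cm_proj: "smooth_mdo A \<Longrightarrow> smooth_mdo (cm_proj A)"
  unfolding smooth_mdo_def is_mdo_iff_vanishes_above
  using vanishes_above_cm_proj by (auto simp: cm_proj_def)

lemma cm_proj_cm_mul_const_left:
  "is_mdo A \<Longrightarrow> cm_proj (cm_mul (cm_const f) A) = cm_mul (cm_const f) (cm_proj A)"
proof -
  assume a: "is_mdo A"
  have "is_mdo (cm_proj A)" using a vanishes_above_cm_proj is_mdo_iff_vanishes_above by blast
  then show ?thesis using a by (simp add: cm_mul_cm_const_left) (auto simp: cm_proj_def)
qed

lemma gchoose_of_int_eq_0:
  assumes "0 \<le> i" "int k > i"
  shows "((of_int i :: 'a :: field_char_0) gchoose k) = 0"
proof -
  have "(of_int i :: 'a) = of_nat (nat i)" using assms(1) by simp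
  moreover have "nat i choose k = 0" using assms by simp
  ultimately show ?thesis by (metis binomial_gbinomial of_nat_0)
qed

text \<open>A term \<open>a \<partial>\<^sup>i\<close> with \<open>i < 0\<close> times a function only produces orders \<open>< 0\<close>, and for
  \<open>i \<ge> 0\<close> only orders \<open>\<ge> 0\<close>, because \<open>i gchoose k = 0\<close> for \<open>k > i\<close>.\<close>

lemma cm_proj_cm_mul_const_right:
  assumes "is_mdo A"
  shows "cm_proj (cm_mul A (cm_const g)) = cm_mul (cm_proj A) (cm_const g)"
proof (intro ext)
  fix m p
  have mP: "is_mdo (cm_proj A)" using assms vanishes_above_cm_proj is_mdo_iff_vanishes_above
    by blast
  have t: "mul_term (cm_proj A) (cm_const g) m p x
      = (if m \<ge> 0 then mul_term A (cm_const g) m p x else 0)" for x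
  proof -
    obtain i k where x: "x = (i, k)" by force
    show ?thesis
    proof (cases "m - i + int k = 0")
      case False
      then show ?thesis unfolding x mul_term_def cm_const_def by simp
    next
      case True
      then have ik: "i = m + int k" by simp
      show ?thesis
      proof (cases "m \<ge> 0")
        case True then show ?thesis unfolding x mul_term_def cm_proj_def using ik by simp
      next
        case False
        show ?thesis
        proof (cases "i \<ge> 0")
          case True
          then have "((of_int i :: complex) gchoose k) = 0" using False ik
            by (intro gchoose_of_int_eq_0) auto
          then show ?thesis unfolding x mul_term_def by simp
        next
          case False2: False
          then show ?thesis using False unfolding x mul_term_def cm_proj_def by simp
        qed
      qed
    qed
  qed
  show "cm_proj (cm_mul A (cm_const g)) m p = cm_mul (cm_proj A) (cm_const g) m p"
    unfolding cm_mul_Sum_any[OF mP is_mdo_cm_const] t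
    by (cases "m \<ge> 0") (simp_all add: cm_proj_def cm_mul_Sum_any[OF assms is_mdo_cm_const])
qed

section \<open>The ring of smooth operators\<close>

typedef smdo = "{A::mdo. smooth_mdo A}" morphisms Rep_smdo Abs_smdo
  by (rule exI[of _ cm_one]) (simp add: smooth_mdo_cm_one)

lemma smooth_mdo_Rep_smdo: "smooth_mdo (Rep_smdo a)"
  using Rep_smdo by simp

lemma is_mdo_Rep_smdo: "is_mdo (Rep_smdo a)"
  using smooth_mdo_Rep_smdo smooth_mdo_def by blast

lemma Rep_smdo_Abs_smdo: "smooth_mdo A \<Longrightarrow> Rep_smdo (Abs_smdo A) = A"
  by (simp add: Abs_smdo_inverse)

instantiation smdo :: ring_1
begin

definition zero_smdo_def: "0 = Abs_smdo (\<lambda>m p. 0)"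
definition one_smdo_def: "1 = Abs_smdo cm_one"
definition plus_smdo_def: "a + b = Abs_smdo (cm_add (Rep_smdo a) (Rep_smdo b))"
definition minus_smdo_def: "a - b = Abs_smdo (cm_sub (Rep_smdo a) (Rep_smdo b))"
definition uminus_smdo_def: "- a = Abs_smdo (cm_neg (Rep_smdo a))"
definition times_smdo_def: "a * b = Abs_smdo (cm_mul (Rep_smdo a) (Rep_smdo b))"

lemma Rep_smdo_zero: "Rep_smdo 0 = (\<lambda>m p. 0)"
  unfolding zero_smdo_def by (simp add: Rep_smdo_Abs_smdo smooth_mdo_zero)

lemma Rep_smdo_one: "Rep_smdo 1 = cm_one"
  unfolding one_smdo_def by (simp add: Rep_smdo_Abs_smdo smooth_mdo_cm_one)

lemma Rep_smdo_plus: "Rep_smdo (a + b) = cm_add (Rep_smdo a) (Rep_smdo b)"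
  unfolding plus_smdo_def by (simp add: Rep_smdo_Abs_smdo smooth_mdo_cm_add smooth_mdo_Rep_smdo)

lemma Rep_smdo_minus: "Rep_smdo (a - b) = cm_sub (Rep_smdo a) (Rep_smdo b)"
  unfolding minus_smdo_def by (simp add: Rep_smdo_Abs_smdo smooth_mdo_cm_sub smooth_mdo_Rep_smdo)

lemma Rep_smdo_uminus: "Rep_smdo (- a) = cm_neg (Rep_smdo a)"
  unfolding uminus_smdo_def by (simp add: Rep_smdo_Abs_smdo smooth_mdo_cm_neg smooth_mdo_Rep_smdo)

lemma Rep_smdo_times: "Rep_smdo (a * b) = cm_mul (Rep_smdo a) (Rep_smdo b)"
  unfolding times_smdo_def by (simp add: Rep_smdo_Abs_smdo smooth_mdo_cm_mul smooth_mdo_Rep_smdo)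

instance
proof
  fix a b c :: smdo
  show "a + b + c = a + (b + c)"
    by (rule Rep_smdo_inject[THEN iffD1]) (simp add: Rep_smdo_plus cm_add_def add.assoc)
  show "a + b = b + a"
    by (rule Rep_smdo_inject[THEN iffD1]) (simp add: Rep_smdo_plus cm_add_def add.commute)
  show "0 + a = a"
    by (rule Rep_smdo_inject[THEN iffD1]) (simp add: Rep_smdo_plus Rep_smdo_zero cm_add_def)
  show "- a + a = 0"
    by (rule Rep_smdo_inject[THEN iffD1])
      (simp add: Rep_smdo_plus Rep_smdo_zero Rep_smdo_uminus cm_add_def cm_neg_def)
  show "a - b = a + - b"
    by (rule Rep_smdo_inject[THEN iffD1])
      (simp add: Rep_smdo_plus Rep_smdo_minus Rep_smdo_uminus cm_add_def cm_neg_def cm_sub_def)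
  show "a * b * c = a * (b * c)"
    by (rule Rep_smdo_inject[THEN iffD1]) (simp add: Rep_smdo_times cm_mul_assoc
        smooth_mdo_Rep_smdo)
  show "(a + b) * c = a * c + b * c"
    by (rule Rep_smdo_inject[THEN iffD1])
      (simp add: Rep_smdo_times Rep_smdo_plus cm_mul_add_left is_mdo_Rep_smdo)
  show "a * (b + c) = a * b + a * c"
    by (rule Rep_smdo_inject[THEN iffD1])
      (simp add: Rep_smdo_times Rep_smdo_plus cm_mul_add_right smooth_mdo_Rep_smdo)
  show "1 * a = a"
    by (rule Rep_smdo_inject[THEN iffD1])
      (simp add: Rep_smdo_times Rep_smdo_one cm_mul_one_left is_mdo_Rep_smdo)
  show "a * 1 = a"
    by (rule Rep_smdo_inject[THEN iffD1])
      (simp add: Rep_smdo_times Rep_smdo_one cm_mul_one_right is_mdo_Rep_smdo)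
  have "Rep_smdo (0::smdo) 0 \<noteq> Rep_smdo 1 0"
    by (auto simp: Rep_smdo_zero Rep_smdo_one cm_one_def cm_const_def fun_eq_iff)
  then show "(0::smdo) \<noteq> 1" by metis
qed

end

lemma Rep_smdo_power: "cm_pow (Rep_smdo a) n = Rep_smdo (a ^ n)"
  by (induction n) (simp_all add: Rep_smdo_one Rep_smdo_times)

lemma Abs_smdo_cm_mul:
  "smooth_mdo A \<Longrightarrow> smooth_mdo B \<Longrightarrow> Abs_smdo (cm_mul A B) = Abs_smdo A * Abs_smdo B"
  by (simp add: times_smdo_def Rep_smdo_Abs_smdo)

lemma cm_comm_Rep_smdo: "cm_comm (Rep_smdo a) (Rep_smdo b) = Rep_smdo (a * b - b * a)"
  by (simp add: cm_comm_def Rep_smdo_minus Rep_smdo_times)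

definition smdo_const :: "coef \<Rightarrow> smdo" where
  "smdo_const c = Abs_smdo (cm_const c)"

lemma Rep_smdo_const: "cm_smooth c \<Longrightarrow> Rep_smdo (smdo_const c) = cm_const c"
  unfolding smdo_const_def by (simp add: Rep_smdo_Abs_smdo smooth_mdo_cm_const)

lemma smdo_const_mult:
  "cm_smooth f \<Longrightarrow> cm_smooth g \<Longrightarrow> smdo_const f * smdo_const g = smdo_const (\<lambda>p. f p * g p)"
  by (rule Rep_smdo_inject[THEN iffD1])
    (simp add: Rep_smdo_times Rep_smdo_const cm_mul_cm_const_cm_const cm_smooth_mult)

lemma smdo_const_commute:
  "cm_smooth f \<Longrightarrow> cm_smooth g \<Longrightarrow> smdo_const f * smdo_const g = smdo_const g * smdo_const f"
  by (simp add: smdo_const_mult mult.commute)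

lemma smdo_const_one: "smdo_const (\<lambda>p. 1) = 1"
  by (rule Rep_smdo_inject[THEN iffD1]) (simp add: Rep_smdo_const Rep_smdo_one cm_one_def)

lemma smdo_const_diff:
  "cm_smooth f \<Longrightarrow> cm_smooth g \<Longrightarrow> smdo_const f - smdo_const g = smdo_const (\<lambda>p. f p - g p)"
  by (rule Rep_smdo_inject[THEN iffD1])
    (auto simp: Rep_smdo_minus Rep_smdo_const cm_smooth_diff cm_sub_def cm_const_def)

lemma smdo_const_uminus: "cm_smooth f \<Longrightarrow> smdo_const (\<lambda>p. - f p) = - smdo_const f"
  by (rule Rep_smdo_inject[THEN iffD1])
    (simp add: Rep_smdo_uminus Rep_smdo_const cm_smooth_minus cm_neg_def cm_const_def fun_eq_iff)

definition smdo_deriv :: "nat \<Rightarrow> smdo \<Rightarrow> smdo" where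
  "smdo_deriv n a = Abs_smdo (cm_dop n (Rep_smdo a))"

lemma Rep_smdo_deriv: "Rep_smdo (smdo_deriv n a) = cm_dop n (Rep_smdo a)"
  unfolding smdo_deriv_def by (simp add: Rep_smdo_Abs_smdo smooth_mdo_cm_dop smooth_mdo_Rep_smdo)

lemma smdo_deriv_mult: "smdo_deriv n (a * b) = smdo_deriv n a * b + a * smdo_deriv n b"
  by (rule Rep_smdo_inject[THEN iffD1])
    (simp add: Rep_smdo_deriv Rep_smdo_times Rep_smdo_plus cm_dop_cm_mul smooth_mdo_Rep_smdo)

lemma smdo_deriv_const: "cm_smooth c \<Longrightarrow> smdo_deriv n (smdo_const c) = smdo_const (cm_pd n c)"
  by (rule Rep_smdo_inject[THEN iffD1])
    (simp add: Rep_smdo_deriv Rep_smdo_const cm_dop_cm_const cm_smooth_cm_pd)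

definition smdo_proj :: "smdo \<Rightarrow> smdo" where
  "smdo_proj a = Abs_smdo (cm_proj (Rep_smdo a))"

lemma Rep_smdo_proj: "Rep_smdo (smdo_proj a) = cm_proj (Rep_smdo a)"
  unfolding smdo_proj_def by (simp add: Rep_smdo_Abs_smdo smooth_mdo_cm_proj smooth_mdo_Rep_smdo)

lemma smdo_proj_conj:
  "cm_smooth f \<Longrightarrow> cm_smooth g \<Longrightarrow>
     smdo_proj (smdo_const f * a * smdo_const g) = smdo_const f * smdo_proj a * smdo_const g"
  by (rule Rep_smdo_inject[THEN iffD1])
    (simp add: Rep_smdo_proj Rep_smdo_times Rep_smdo_const cm_proj_cm_mul_const_right
       cm_proj_cm_mul_const_left is_mdo_cm_mul is_mdo_cm_const is_mdo_Rep_smdo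
       smooth_mdo_cm_proj[OF smooth_mdo_Rep_smdo, unfolded smooth_mdo_def])

section \<open>Inverting operators with nowhere vanishing leading coefficient\<close>

definition exact_order :: "mdo \<Rightarrow> int \<Rightarrow> bool" where
  "exact_order A N \<longleftrightarrow> smooth_mdo A \<and> vanishes_above A N \<and> (\<forall>p. A N p \<noteq> 0)"

lemma exact_order_cm_one: "exact_order cm_one 0"
  unfolding exact_order_def cm_one_def
  using smooth_mdo_cm_one vanishes_above_cm_const by (simp add: cm_one_def cm_const_def)

lemma exact_order_cm_mul:
  assumes "exact_order A M" "exact_order B N"
  shows "exact_order (cm_mul A B) (M + N)"
  using assms smooth_mdo_cm_mul vanishes_above_cm_mul cm_mul_leading
  by (simp add: exact_order_def smooth_mdo_def)

lemma cm_mul_local_left: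
  assumes "vanishes_above X N" "is_mdo X" "is_mdo Y" "is_mdo Y'"
    and "\<And>i. i \<ge> m - N \<Longrightarrow> Y i = Y' i"
  shows "cm_mul Y X m p = cm_mul Y' X m p"
proof -
  have "mul_term Y X m p (i, k) = mul_term Y' X m p (i, k)" for i k
  proof (cases "i \<ge> m - N")
    case True
    then show ?thesis using assms(5) unfolding mul_term_def by simp
  next
    case False
    then have "X (m - i + int k) = (\<lambda>p. 0)"
      using assms(1) unfolding vanishes_above_def by simp
    then show ?thesis unfolding mul_term_def by simp
  qed
  then have "mul_term Y X m p = mul_term Y' X m p" by (simp add: fun_eq_iff)
  then show ?thesis using cm_mul_Sum_any[OF assms(3,2)] cm_mul_Sum_any[OF assms(4,2)] by simp
qed

definition monomial_op :: "int \<Rightarrow> coef \<Rightarrow> mdo" where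
  "monomial_op i0 v = (\<lambda>i. if i = i0 then v else (\<lambda>p. 0))"

lemma vanishes_above_monomial_op: "vanishes_above (monomial_op i0 v) i0"
  unfolding vanishes_above_def monomial_op_def by auto

lemma smooth_mdo_monomial_op: "cm_smooth v \<Longrightarrow> smooth_mdo (monomial_op i0 v)"
  unfolding smooth_mdo_def is_mdo_iff_vanishes_above using vanishes_above_monomial_op
  by (auto simp: monomial_op_def)

text \<open>The left inverse of \<open>X\<close> (of order \<open>N\<close>) is built order by order: step \<open>r\<close> adds the
  coefficient of \<open>\<partial>\<^sup>-\<^sup>N\<^sup>-\<^sup>r\<close> that makes the coefficient of \<open>\<partial>\<^sup>-\<^sup>r\<close> in \<open>Y X\<close> equal to
  \<open>\<delta>\<^sub>r\<^sub>0\<close>; later steps do not change this coefficient any more.\<close>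

definition left_inv_step :: "mdo \<Rightarrow> int \<Rightarrow> mdo \<Rightarrow> nat \<Rightarrow> coef" where
  "left_inv_step X N Y r = (\<lambda>p. ((if r = 0 then 1 else 0) - cm_mul Y X (- int r) p) / X N p)"

primrec left_inv_approx :: "mdo \<Rightarrow> int \<Rightarrow> nat \<Rightarrow> mdo" where
  "left_inv_approx X N 0 = (\<lambda>i p. 0)"
| "left_inv_approx X N (Suc r) = cm_add (left_inv_approx X N r)
     (monomial_op (- N - int r) (left_inv_step X N (left_inv_approx X N r) r))"

lemma left_inv_approx_props:
  assumes "exact_order X N"
  shows "smooth_mdo (left_inv_approx X N r) \<and> vanishes_above (left_inv_approx X N r) (- N)
    \<and> (\<forall>i. i \<le> - N - int r \<longrightarrow> left_inv_approx X N r i = (\<lambda>p. 0))"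
proof (induction r)
  case 0
  then show ?case using smooth_mdo_zero by (simp add: vanishes_above_def)
next
  case (Suc r)
  let ?v = "left_inv_step X N (left_inv_approx X N r) r"
  have "cm_smooth ?v"
    using Suc.IH assms unfolding left_inv_step_def
    by (intro cm_smooth_divide cm_smooth_diff cm_smooth_const cm_smooth_cm_mul)
      (auto simp: exact_order_def smooth_mdo_def)
  then have "smooth_mdo (left_inv_approx X N (Suc r))"
    using Suc.IH by (simp add: smooth_mdo_cm_add smooth_mdo_monomial_op)
  moreover have "vanishes_above (left_inv_approx X N (Suc r)) (- N)"
    using Suc.IH vanishes_above_mono[OF vanishes_above_monomial_op]
    by (simp add: vanishes_above_cm_add)
  moreover have "\<forall>i. i \<le> - N - int (Suc r) \<longrightarrow> left_inv_approx X N (Suc r) i = (\<lambda>p. 0)"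
    using Suc.IH by (auto simp: cm_add_def monomial_op_def)
  ultimately show ?case by blast
qed

lemma left_inv_approx_stable:
  assumes "r \<le> r'" "i > - N - int r"
  shows "left_inv_approx X N r' i = left_inv_approx X N r i"
  using assms by (induction r' rule: dec_induct) (auto simp: cm_add_def monomial_op_def)

lemma left_inv_approx_coeff:
  assumes "exact_order X N"
  shows "cm_mul (left_inv_approx X N (Suc r)) X (- int r) p = (if r = 0 then 1 else 0)"
proof -
  let ?Y = "left_inv_approx X N r" and ?v = "left_inv_step X N (left_inv_approx X N r) r"
  have X: "is_mdo X" "vanishes_above X N" "\<And>p. X N p \<noteq> 0"
    using assms by (auto simp: exact_order_def smooth_mdo_def)
  have "cm_smooth ?v"
    using left_inv_approx_props[OF assms] assms unfolding left_inv_step_def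
    by (intro cm_smooth_divide cm_smooth_diff cm_smooth_const cm_smooth_cm_mul)
      (auto simp: exact_order_def smooth_mdo_def)
  then have mm: "is_mdo ?Y" "is_mdo (monomial_op (- N - int r) ?v)"
    using left_inv_approx_props[OF assms] smooth_mdo_monomial_op smooth_mdo_def by blast+
  have "cm_mul (left_inv_approx X N (Suc r)) X (- int r) p
      = cm_mul ?Y X (- int r) p + cm_mul (monomial_op (- N - int r) ?v) X (- int r) p"
    by (simp only: left_inv_approx.simps cm_mul_add_left[OF mm X(1)]) (simp add: cm_add_def)
  also have "cm_mul (monomial_op (- N - int r) ?v) X (- int r) p = ?v p * X N p"
    using cm_mul_leading[OF vanishes_above_monomial_op X(2) mm(2) X(1), of p]
    by (simp add: monomial_op_def)
  finally show ?thesis using X(3)[of p] by (simp add: left_inv_step_def)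
qed

definition left_inv_series :: "mdo \<Rightarrow> int \<Rightarrow> mdo" where
  "left_inv_series X N = (\<lambda>i. left_inv_approx X N (Suc (nat (- N - i))) i)"

lemma left_inv_series_eq:
  assumes "i > - N - int r"
  shows "left_inv_series X N i = left_inv_approx X N r i"
proof -
  let ?r0 = "Suc (nat (- N - i))"
  have "left_inv_approx X N (max r ?r0) i = left_inv_approx X N r i"
    using assms by (intro left_inv_approx_stable) auto
  moreover have "left_inv_approx X N (max r ?r0) i = left_inv_approx X N ?r0 i"
    by (intro left_inv_approx_stable) auto
  ultimately show ?thesis unfolding left_inv_series_def by simp
qed

lemma exact_order_left_inv_series:
  assumes "exact_order X N"
  shows "exact_order (left_inv_series X N) (- N)"
proof -
  let ?Y = "left_inv_series X N"
  have "vanishes_above ?Y (- N)"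
    unfolding vanishes_above_def
  proof (intro allI impI)
    fix i assume "i > - N"
    then show "?Y i = (\<lambda>p. 0)" using left_inv_series_eq[where r = 0] by simp
  qed
  moreover have "smooth_mdo ?Y"
    using left_inv_approx_props[OF assms] calculation
    unfolding smooth_mdo_def is_mdo_iff_vanishes_above left_inv_series_def by blast
  moreover have "\<forall>p. ?Y (- N) p \<noteq> 0"
  proof -
    have "?Y (- N) = left_inv_approx X N 1 (- N)" by (rule left_inv_series_eq) simp
    then show ?thesis
      using assms cm_mul_zero_left[of X]
      by (simp add: cm_add_def monomial_op_def left_inv_step_def exact_order_def smooth_mdo_def)
  qed
  ultimately show ?thesis by (simp add: exact_order_def)
qed

lemma left_inv_series_mul:
  assumes "exact_order X N"
  shows "cm_mul (left_inv_series X N) X = cm_one"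
proof (intro ext)
  fix m p
  let ?Y = "left_inv_series X N"
  have X: "is_mdo X" "vanishes_above X N"
    using assms by (auto simp: exact_order_def smooth_mdo_def)
  have Y: "smooth_mdo ?Y" "vanishes_above ?Y (- N)"
    using exact_order_left_inv_series[OF assms] by (simp_all add: exact_order_def)
  show "cm_mul ?Y X m p = cm_one m p"
  proof (cases "m > 0")
    case True
    have "vanishes_above (cm_mul ?Y X) (- N + N)"
      using vanishes_above_cm_mul[OF Y(2) X(2)] Y(1) X(1) smooth_mdo_def by auto
    then show ?thesis using True by (simp add: vanishes_above_def cm_one_def cm_const_def)
  next
    case False
    then obtain r where m: "m = - int r"
      by (metis neg_0_less_iff_less not_le nonneg_int_cases minus_minus zero_le_imp_eq_int)
    have "cm_mul ?Y X m p = cm_mul (left_inv_approx X N (Suc r)) X m p"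
      using Y(1) left_inv_approx_props[OF assms, of "Suc r"] X(1) unfolding smooth_mdo_def
      by (intro cm_mul_local_left[OF X(2)] left_inv_series_eq) (auto simp: m)
    then show ?thesis
      using left_inv_approx_coeff[OF assms] by (simp add: m cm_one_def cm_const_def)
  qed
qed

lemma left_inv_exists:
  "exact_order X N \<Longrightarrow> \<exists>Y. exact_order Y (- N) \<and> cm_mul Y X = cm_one"
  using exact_order_left_inv_series left_inv_series_mul by blast

lemma two_sided_inv_exists:
  assumes "exact_order X N"
  shows "\<exists>Y. exact_order Y (- N) \<and> cm_mul Y X = cm_one \<and> cm_mul X Y = cm_one"
proof -
  obtain Y where Y: "exact_order Y (- N)" "cm_mul Y X = cm_one"
    using left_inv_exists[OF assms] by blast
  obtain Z where Z: "exact_order Z (- (- N))" "cm_mul Z Y = cm_one"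
    using left_inv_exists[OF Y(1)] by blast
  have smooth: "smooth_mdo X" "smooth_mdo Y" "smooth_mdo Z"
    using assms Y Z by (simp_all add: exact_order_def)
  have yx: "Abs_smdo Y * Abs_smdo X = 1" and zy: "Abs_smdo Z * Abs_smdo Y = 1"
    using Y Z smooth
    by (simp_all add: Rep_smdo_inject[symmetric] Rep_smdo_times Rep_smdo_Abs_smdo Rep_smdo_one)
  have "Abs_smdo Z = Abs_smdo Z * (Abs_smdo Y * Abs_smdo X)" using yx by simp
  also have "\<dots> = Abs_smdo X" using zy by (simp add: mult.assoc[symmetric])
  finally have "Abs_smdo X * Abs_smdo Y = 1" using zy by simp
  then have "cm_mul X Y = cm_one"
    using smooth by (metis Rep_smdo_Abs_smdo Rep_smdo_one Rep_smdo_times)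
  then show ?thesis using Y by blast
qed

lemma exists_leading_coeff:
  assumes "is_mdo D" "D m0 p0 \<noteq> 0"
  shows "\<exists>T. vanishes_above D T \<and> (\<exists>p. D T p \<noteq> 0)"
proof -
  obtain M where M: "vanishes_above D M" using assms(1) is_mdo_iff_vanishes_above by blast
  define S where "S = {i \<in> {m0..M}. \<exists>p. D i p \<noteq> 0}"
  have m0M: "m0 \<le> M" using assms(2) vanishes_above_nonzero[OF M] by blast
  have fS: "finite S" unfolding S_def by (rule finite_subset[of _ "{m0..M}"]) auto
  have m0S: "m0 \<in> S" unfolding S_def using assms(2) m0M by auto
  define T where "T = Max S"
  have TS: "T \<in> S" unfolding T_def using fS m0S by (intro Max_in) auto
  have Tge: "T \<ge> m0" unfolding T_def using fS m0S by simp
  have "vanishes_above D T" unfolding vanishes_above_def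
  proof (intro allI impI)
    fix i assume i: "i > T"
    show "D i = (\<lambda>p. 0)"
    proof (cases "i \<le> M")
      case True
      have "i \<notin> S" using i fS T_def Max_ge leD by blast
      then show ?thesis using True i Tge unfolding S_def by auto
    next
      case False then show ?thesis using M unfolding vanishes_above_def by simp
    qed
  qed
  then show ?thesis using TS unfolding S_def by blast
qed

lemma left_inv_unique:
  assumes "exact_order X N"
    and "is_mdo B" "is_mdo B'" "cm_mul B X = cm_one" "cm_mul B' X = cm_one"
  shows "B = B'"
proof (rule ccontr)
  assume ne: "B \<noteq> B'"
  define D where "D = cm_sub B B'"
  have X: "is_mdo X" "vanishes_above X N" "\<And>p. X N p \<noteq> 0"
    using assms(1) by (auto simp: exact_order_def smooth_mdo_def)
  have mD: "is_mdo D" unfolding D_def using assms(2,3) is_mdo_cm_sub by blast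
  have DX: "cm_mul D X = (\<lambda>m p. 0)"
    unfolding D_def cm_mul_sub_left[OF assms(2,3) X(1)] assms(4,5) by (simp add: cm_sub_def)
  obtain m0 p0 where "B m0 p0 \<noteq> B' m0 p0" using ne by (meson ext)
  then have "D m0 p0 \<noteq> 0" unfolding D_def cm_sub_def by simp
  then obtain T p where T: "vanishes_above D T" "D T p \<noteq> 0"
    using exists_leading_coeff[OF mD] by blast
  have "cm_mul D X (T + N) p = D T p * X N p" by (rule cm_mul_leading[OF T(1) X(2) mD X(1)])
  then have "D T p * X N p = 0" using DX by simp
  then show False using T(2) X(3)[of p] by simp
qed

lemma cm_inv_eqI:
  assumes "exact_order X N" "is_mdo Y" "cm_mul Y X = cm_one" "cm_mul X Y = cm_one"
  shows "cm_inv X = Y"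
  unfolding cm_inv_def
proof (rule the_equality)
  show "is_mdo Y \<and> cm_mul Y X = cm_one \<and> cm_mul X Y = cm_one" using assms by auto
  fix B assume "is_mdo B \<and> cm_mul B X = cm_one \<and> cm_mul X B = cm_one"
  then show "B = Y" using left_inv_unique[OF assms(1), of B Y] assms by auto
qed

lemma cm_inv_spec:
  assumes "exact_order X N"
  shows "exact_order (cm_inv X) (- N) \<and> cm_mul (cm_inv X) X = cm_one \<and> cm_mul X (cm_inv X) = cm_one"
proof -
  obtain Y where Y: "exact_order Y (- N)" "cm_mul Y X = cm_one" "cm_mul X Y = cm_one"
    using two_sided_inv_exists[OF assms] by blast
  then have "cm_inv X = Y"
    by (intro cm_inv_eqI[OF assms]) (auto simp: exact_order_def smooth_mdo_def)
  then show ?thesis using Y by simp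
qed

section \<open>The operators \<open>P\<^sup>(\<^sup>k\<^sup>)(s)\<close> and the expansion of powers of \<open>L\<close>\<close>

definition first_order_family :: "(int \<Rightarrow> mdo) \<Rightarrow> bool" where
  "first_order_family Q \<longleftrightarrow> (\<forall>s. exact_order (Q s) 1)"

lemma exact_order_cm_Pup: "first_order_family Q \<Longrightarrow> exact_order (cm_Pup Q s j) (int j)"
proof (induction j)
  case 0
  then show ?case using exact_order_cm_one by simp
next
  case (Suc j)
  then have "exact_order (cm_mul (Q (s + int j)) (cm_Pup Q s j)) (1 + int j)"
    by (intro exact_order_cm_mul) (auto simp: first_order_family_def)
  then show ?case by (simp add: add.commute)
qed

lemma exact_order_cm_Pdown: "first_order_family Q \<Longrightarrow> exact_order (cm_Pdown Q s j) (- int j)"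
proof (induction j)
  case 0
  then show ?case using exact_order_cm_one by simp
next
  case (Suc j)
  then have "exact_order (cm_mul (cm_inv (Q (s - int (Suc j)))) (cm_Pdown Q s j)) (- 1 + - int j)"
    by (intro exact_order_cm_mul) (auto simp: first_order_family_def dest: cm_inv_spec)
  then show ?case by simp
qed

lemma exact_order_cm_Pn: "first_order_family Q \<Longrightarrow> exact_order (cm_Pn Q s k) k"
  using exact_order_cm_Pup[of Q s "nat k"] exact_order_cm_Pdown[of Q s "nat (- k)"]
  by (cases "k \<ge> 0") (simp_all add: cm_Pn_def)

definition P_expansion :: "mdo \<Rightarrow> (int \<Rightarrow> mdo) \<Rightarrow> int \<Rightarrow> nat \<Rightarrow> (nat \<Rightarrow> coef) \<Rightarrow> bool" where
  "P_expansion X Q s n b \<longleftrightarrow> (\<forall>m. X m = (\<lambda>p. \<Sum>j\<in>{j::nat. int j \<le> int n - m}.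
              cm_mul (cm_const (b j)) (cm_Pn Q s (int n - int j)) m p))"

lemma cm_b_altdef: "cm_b L P s n = (THE b. P_expansion (cm_pow (L s) n) P s n b)"
  unfolding cm_b_def P_expansion_def ..

lemma P_expansion_iff:
  assumes "first_order_family Q"
  shows "P_expansion X Q s n b \<longleftrightarrow>
      (\<forall>m p. X m p = (\<Sum>j\<in>{j::nat. int j \<le> int n - m}. b j p * cm_Pn Q s (int n - int j) m p))"
proof -
  have "cm_mul (cm_const (b j)) (cm_Pn Q s k) = (\<lambda>m p. b j p * cm_Pn Q s k m p)" for j k
    using exact_order_cm_Pn[OF assms, of s k, unfolded exact_order_def] smooth_mdo_def
    by (simp add: cm_mul_cm_const_left)
  then show ?thesis unfolding P_expansion_def by (auto simp: fun_eq_iff)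
qed

lemma nat_le_diff_set_eq: "m \<le> int n \<Longrightarrow> {j::nat. int j \<le> int n - m} = {..nat (int n - m)}"
  by auto

lemma nat_le_diff_set_empty: "m > int n \<Longrightarrow> {j::nat. int j \<le> int n - m} = {}"
  by auto

lemma sum_atMost_split_last: "(\<Sum>j\<le>(J::nat). f j) = f J + (\<Sum>j<J. f j)"
  by (simp add: lessThan_Suc_atMost[symmetric] add.commute)

lemma P_expansion_unique:
  assumes "first_order_family Q" "P_expansion X Q s n b" "P_expansion X Q s n b'"
  shows "b = b'"
proof -
  have e: "X m p = (\<Sum>j\<in>{j::nat. int j \<le> int n - m}. b j p * cm_Pn Q s (int n - int j) m p)"
          "X m p = (\<Sum>j\<in>{j::nat. int j \<le> int n - m}. b' j p * cm_Pn Q s (int n - int j) m p)" for m p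
    using assms P_expansion_iff by blast+
  have "b j = b' j" for j
  proof (induction j rule: less_induct)
    case (less j)
    show ?case
    proof
      fix p
      define m where "m = int n - int j"
      have jm: "nat (int n - m) = j" "m \<le> int n" unfolding m_def by auto
      have "b j p * cm_Pn Q s m m p + (\<Sum>j'<j. b j' p * cm_Pn Q s (int n - int j') m p)
          = b' j p * cm_Pn Q s m m p + (\<Sum>j'<j. b' j' p * cm_Pn Q s (int n - int j') m p)"
        using e[of m p] unfolding nat_le_diff_set_eq[OF jm(2)] jm(1) sum_atMost_split_last
        by (simp add: m_def)
      moreover have "(\<Sum>j'<j. b j' p * cm_Pn Q s (int n - int j') m p)
          = (\<Sum>j'<j. b' j' p * cm_Pn Q s (int n - int j') m p)"
        using less.IH by simp
      ultimately have "b j p * cm_Pn Q s m m p = b' j p * cm_Pn Q s m m p" by simp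
      moreover have "cm_Pn Q s m m p \<noteq> 0"
        using exact_order_cm_Pn[OF assms(1), unfolded exact_order_def] by blast
      ultimately show "b j p = b' j p" by simp
    qed
  qed
  then show ?thesis by blast
qed

text \<open>The expansion is solved from the top order downwards: the coefficient of
  \<open>\<partial>\<^sup>n\<^sup>-\<^sup>r\<close> in \<open>X\<close> involves only the coefficients \<open>j \<le> r\<close>, and the one with
  \<open>j = r\<close> comes multiplied by the nowhere vanishing leading coefficient of
  \<open>P\<^sup>(\<^sup>n\<^sup>-\<^sup>r\<^sup>)\<close>.\<close>

primrec P_expansion_coeffs ::
  "mdo \<Rightarrow> (int \<Rightarrow> mdo) \<Rightarrow> int \<Rightarrow> nat \<Rightarrow> nat \<Rightarrow> (nat \<Rightarrow> coef)" where
  "P_expansion_coeffs X Q s n 0 = (\<lambda>j p. 0)"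
| "P_expansion_coeffs X Q s n (Suc r)
    = (P_expansion_coeffs X Q s n r)(r := (\<lambda>p. (X (int n - int r) p
      - (\<Sum>j'<r. P_expansion_coeffs X Q s n r j' p * cm_Pn Q s (int n - int j') (int n - int r) p))
      / cm_Pn Q s (int n - int r) (int n - int r) p))"

lemma P_expansion_coeffs_stable:
  "j < r \<Longrightarrow> P_expansion_coeffs X Q s n r j = P_expansion_coeffs X Q s n (Suc j) j"
proof (induction r)
  case 0 then show ?case by simp
next
  case (Suc r)
  show ?case
  proof (cases "j < r")
    case True then show ?thesis using Suc
      by (simp del: P_expansion_coeffs.simps(2) add: P_expansion_coeffs.simps(2)[of X Q s n r])
  next
    case False then have "j = r" using Suc.prems by simp
    then show ?thesis by simp
  qed
qed

lemma P_expansion_exists: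
  assumes "first_order_family Q" "vanishes_above X (int n)"
  shows "P_expansion X Q s n (\<lambda>j. P_expansion_coeffs X Q s n (Suc j) j)"
  unfolding P_expansion_iff[OF assms(1)]
proof (intro allI)
  fix m p
  show "X m p = (\<Sum>j\<in>{j::nat. int j \<le> int n - m}. P_expansion_coeffs X Q s n (Suc j) j p
      * cm_Pn Q s (int n - int j) m p)"
  proof (cases "m > int n")
    case True then show ?thesis using vanishes_aboveD[OF assms(2)] nat_le_diff_set_empty by simp
  next
    case False
    define J where "J = nat (int n - m)"
    have mJ: "m = int n - int J" unfolding J_def using False by simp
    have lead: "cm_Pn Q s m m p \<noteq> 0"
      using exact_order_cm_Pn[OF assms(1), unfolded exact_order_def] by blast
    have st: "(\<Sum>j<J. P_expansion_coeffs X Q s n (Suc j) j p * cm_Pn Q s (int n - int j) m p)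
        = (\<Sum>j<J. P_expansion_coeffs X Q s n J j p * cm_Pn Q s (int n - int j) m p)"
      using P_expansion_coeffs_stable[of _ J X Q s n] by simp
    have set: "{j::nat. int j \<le> int n - m} = {..J}" unfolding J_def using False
      by (intro nat_le_diff_set_eq) simp
    have bJ: "P_expansion_coeffs X Q s n (Suc J) J p
        = (X m p - (\<Sum>j'<J. P_expansion_coeffs X Q s n J j' p * cm_Pn Q s (int n - int j') m p)) /
            cm_Pn Q s m m p"
      by (simp only: P_expansion_coeffs.simps(2) fun_upd_same mJ)
    have "(\<Sum>j\<in>{j::nat. int j \<le> int n - m}. P_expansion_coeffs X Q s n (Suc j) j p
        * cm_Pn Q s (int n - int j) m p)
       = P_expansion_coeffs X Q s n (Suc J) J p * cm_Pn Q s (int n - int J) m p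
           + (\<Sum>j<J. P_expansion_coeffs X Q s n J j p * cm_Pn Q s (int n - int j) m p)"
      unfolding set sum_atMost_split_last st ..
    also have "\<dots> = X m p" using lead unfolding bJ mJ[symmetric] by simp
    finally show ?thesis by simp
  qed
qed

lemma cm_b_P_expansion:
  assumes "first_order_family P" "vanishes_above (cm_pow (L s) n) (int n)"
  shows "P_expansion (cm_pow (L s) n) P s n (cm_b L P s n)"
proof -
  have ex: "\<exists>!b. P_expansion (cm_pow (L s) n) P s n b"
    using P_expansion_exists[OF assms] P_expansion_unique[OF assms(1)] by blast
  show ?thesis unfolding cm_b_altdef using theI'[OF ex] .
qed

lemma cm_b_eqI:
  assumes "first_order_family P" "P_expansion (cm_pow (L s) n) P s n b"
  shows "cm_b L P s n = b"
  unfolding cm_b_altdef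
  by (rule the_equality[where P="\<lambda>b. P_expansion (cm_pow (L s) n) P s n b", OF assms(2)])
     (rule P_expansion_unique[OF assms(1) _ assms(2)])

lemma cm_mul_cm_const_right_Sum_any:
  assumes "is_mdo Y"
  shows "cm_mul Y (cm_const g) m p
      = Sum_any (\<lambda>i. if m \<le> i then ((of_int i :: complex) gchoose nat (i - m)) * Y i p
          * dx (nat (i - m)) g p else 0)"
proof -
  define h :: "int \<Rightarrow> int \<times> nat" where "h = (\<lambda>i. (i, nat (i - m)))"
  have "Sum_any (mul_term Y (cm_const g) m p) = Sum_any (mul_term Y (cm_const g) m p \<circ> h)"
  proof (rule Sum_any_reindex_inj)
    show "inj h" unfolding h_def inj_def by simp
    fix x assume x: "x \<notin> range h"
    obtain i k where xx: "x = (i, k)" by force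
    have "m - i + int k \<noteq> 0"
    proof
      assume "m - i + int k = 0"
      then have "x = h i" unfolding xx h_def by auto
      then show False using x by blast
    qed
    then show "mul_term Y (cm_const g) m p x = 0" unfolding xx mul_term_def cm_const_def by simp
  qed
  also have "mul_term Y (cm_const g) m p \<circ> h
      = (\<lambda>i. if m \<le> i then ((of_int i :: complex) gchoose nat (i - m)) * Y i p
          * dx (nat (i - m)) g p else 0)"
    unfolding h_def mul_term_def cm_const_def by (auto simp: fun_eq_iff)
  finally show ?thesis using cm_mul_Sum_any[OF assms is_mdo_cm_const] by simp
qed

lemma P_expansion_Sum_any:
  assumes "first_order_family Q" "P_expansion X Q s n b"
  shows "X i p = Sum_any (\<lambda>j. b j p * cm_Pn Q s (int n - int j) i p)"
proof -
  have "X i p = (\<Sum>j\<in>{j::nat. int j \<le> int n - i}. b j p * cm_Pn Q s (int n - int j) i p)"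
    using assms P_expansion_iff by blast
  also have "\<dots> = Sum_any (\<lambda>j. b j p * cm_Pn Q s (int n - int j) i p)"
  proof (rule Sum_any_eq_sum[symmetric])
    show "finite {j::nat. int j \<le> int n - i}"
      by (rule finite_subset[of _ "{..nat (int n - i)}"]) auto
    fix j assume "j \<notin> {j::nat. int j \<le> int n - i}"
    then have "i > int n - int j" by simp
    then show "b j p * cm_Pn Q s (int n - int j) i p = 0"
      using exact_order_cm_Pn[OF assms(1), unfolded exact_order_def] vanishes_aboveD
      by (metis mult_zero_right)
  qed
  finally show ?thesis .
qed

lemma P_expansion_cm_mul_const_right:
  assumes "first_order_family Q" "P_expansion X Q s n b" "is_mdo X"
  shows "cm_mul X (cm_const g) m p
      = Sum_any (\<lambda>j. b j p * cm_mul (cm_Pn Q s (int n - int j)) (cm_const g) m p)"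
proof -
  define C where "C = (\<lambda>i. ((of_int i :: complex) gchoose nat (i - m)))"
  define F where "F = (\<lambda>i j. if m \<le> i then C i * (b j p * cm_Pn Q s (int n - int j) i p)
      * dx (nat (i - m)) g p else 0)"
  have "cm_mul X (cm_const g) m p
      = Sum_any (\<lambda>i. if m \<le> i then C i * X i p * dx (nat (i - m)) g p else 0)"
    unfolding C_def by (rule cm_mul_cm_const_right_Sum_any[OF assms(3)])
  also have "\<dots> = Sum_any (\<lambda>i. Sum_any (F i))"
    unfolding F_def P_expansion_Sum_any[OF assms(1,2)]
    by (rule Sum_any.cong) (simp add: Sum_any_const_mult Sum_any_mult_const)
  also have "\<dots> = Sum_any (\<lambda>j. Sum_any (\<lambda>i. F i j))"
  proof (rule Sum_any.swap[of "{m..int n} \<times> {..nat (int n - m)}"])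
    show "finite ({m..int n} \<times> {..nat (int n - m)})" by simp
    have "F i j \<noteq> 0 \<Longrightarrow> i \<in> {m..int n} \<and> j \<in> {..nat (int n - m)}" for i j
    proof -
      assume nz: "F i j \<noteq> 0"
      then have mi: "m \<le> i" unfolding F_def by (cases "m \<le> i") auto
      have "cm_Pn Q s (int n - int j) i p \<noteq> 0" using nz unfolding F_def by (cases "m \<le> i") auto
      then have "i \<le> int n - int j"
        using exact_order_cm_Pn[OF assms(1), unfolded exact_order_def] vanishes_above_nonzero
        by blast
      then show ?thesis using mi by auto
    qed
    then show "{a. \<exists>b. F a b \<noteq> 0} \<times> {b. \<exists>a. F a b \<noteq> 0} \<subseteq> {m..int n} \<times> {..nat (int n - m)}" by blast
  qed
  also have "\<dots> = Sum_any (\<lambda>j. b j p * cm_mul (cm_Pn Q s (int n - int j)) (cm_const g) m p)"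
  proof (rule Sum_any.cong)
    fix j
    have "cm_mul (cm_Pn Q s (int n - int j)) (cm_const g) m p
        = Sum_any (\<lambda>i. if m \<le> i then C i * cm_Pn Q s (int n - int j) i p
            * dx (nat (i - m)) g p else 0)"
      using exact_order_cm_Pn[OF assms(1)] unfolding C_def exact_order_def smooth_mdo_def
      by (blast intro: cm_mul_cm_const_right_Sum_any)
    then show "Sum_any (\<lambda>i. F i j) = b j p * cm_mul (cm_Pn Q s (int n - int j)) (cm_const g) m p"
      unfolding F_def
      by (simp add: Sum_any_const_mult[symmetric] if_distrib algebra_simps cong: if_cong)
  qed
  finally show ?thesis .
qed

lemma cm_inv_Rep_smdo:
  assumes "exact_order (Rep_smdo a) N" "b * a = 1" "a * b = 1"
  shows "cm_inv (Rep_smdo a) = Rep_smdo b"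
  using assms by (intro cm_inv_eqI) (simp_all add: is_mdo_Rep_smdo flip: Rep_smdo_times
      Rep_smdo_one)

section \<open>Conjugation by multiplication operators\<close>

lemma Rep_smdo_conj:
  assumes "smooth_mdo X" "cm_smooth f" "cm_smooth g"
  shows "Rep_smdo (smdo_const f * Abs_smdo X * smdo_const g) m p = f p * cm_mul X (cm_const g) m p"
proof -
  have "Rep_smdo (smdo_const f * Abs_smdo X * smdo_const g)
      = cm_mul (cm_const f) (cm_mul X (cm_const g))"
    using assms cm_mul_assoc[OF smooth_mdo_cm_const[OF assms(2)] assms(1)
        smooth_mdo_cm_const[OF assms(3)]]
    by (simp add: Rep_smdo_times Rep_smdo_const Rep_smdo_Abs_smdo)
  also have "\<dots> = (\<lambda>m p. f p * cm_mul X (cm_const g) m p)"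
    using assms by (simp add: cm_mul_cm_const_left is_mdo_cm_mul is_mdo_cm_const smooth_mdo_def)
  finally show ?thesis by simp
qed

lemma cm_mul_cm_const_right_order_one:
  assumes "smooth_mdo X" "vanishes_above X 1" "m \<ge> 0"
  shows "cm_mul X (cm_const g) m p
      = (\<Sum>i\<in>{m..1}. ((of_int i :: complex) gchoose nat (i - m)) * X i p * dx (nat (i - m)) g p)"
proof -
  have "cm_mul X (cm_const g) m p
      = Sum_any (\<lambda>i. if m \<le> i then ((of_int i :: complex) gchoose nat (i - m)) * X i p
          * dx (nat (i - m)) g p else 0)"
    using assms smooth_mdo_def by (intro cm_mul_cm_const_right_Sum_any) auto
  also have "\<dots> = (\<Sum>i\<in>{m..1}.
      (if m \<le> i then ((of_int i :: complex) gchoose nat (i - m)) * X i p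
          * dx (nat (i - m)) g p else 0))"
    by (rule Sum_any_eq_sum) (auto simp: vanishes_aboveD[OF assms(2)])
  also have "\<dots> = (\<Sum>i\<in>{m..1}. ((of_int i :: complex) gchoose nat (i - m)) * X i p
      * dx (nat (i - m)) g p)"
    by (rule sum.cong) auto
  finally show ?thesis .
qed

lemma conj_coeff_1:
  assumes "smooth_mdo X" "vanishes_above X 1" "cm_smooth f" "cm_smooth g"
  shows "Rep_smdo (smdo_const f * Abs_smdo X * smdo_const g) 1 p = f p * X 1 p * g p"
  using Rep_smdo_conj[OF assms(1,3,4)] cm_mul_cm_const_right_order_one[OF assms(1,2), of 1 g p]
  by simp

lemma conj_coeff_0:
  assumes "smooth_mdo X" "vanishes_above X 1" "cm_smooth f" "cm_smooth g"
  shows "Rep_smdo (smdo_const f * Abs_smdo X * smdo_const g) 0 p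
      = f p * (X 0 p * g p + X 1 p * cm_pd 0 g p)"
proof -
  have s: "{0..1::int} = {0, 1}" by auto
  show ?thesis
    using Rep_smdo_conj[OF assms(1,3,4)] cm_mul_cm_const_right_order_one[OF assms(1,2), of 0 g p]
    by (simp add: s)
qed

lemma vanishes_above_conj:
  assumes "smooth_mdo X" "vanishes_above X N" "cm_smooth f" "cm_smooth g"
  shows "vanishes_above (Rep_smdo (smdo_const f * Abs_smdo X * smdo_const g)) N"
proof -
  have "Rep_smdo (smdo_const f * Abs_smdo X * smdo_const g)
      = cm_mul (cm_const f) (cm_mul X (cm_const g))"
    using assms cm_mul_assoc[OF smooth_mdo_cm_const[OF assms(3)] assms(1)
        smooth_mdo_cm_const[OF assms(4)]]
    by (simp add: Rep_smdo_times Rep_smdo_const Rep_smdo_Abs_smdo)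
  moreover have "vanishes_above (cm_mul (cm_const f) (cm_mul X (cm_const g))) (0 + (N + 0))"
    using assms smooth_mdo_def
    by (intro vanishes_above_cm_mul vanishes_above_cm_const is_mdo_cm_mul is_mdo_cm_const) auto
  ultimately show ?thesis by simp
qed

lemma conj_coeff_neg:
  assumes "smooth_mdo X" "vanishes_above X 1" "\<And>i. i < 0 \<Longrightarrow> X i
      = (\<lambda>p. 0)" "cm_smooth f" "cm_smooth g" "m < 0"
  shows "Rep_smdo (smdo_const f * Abs_smdo X * smdo_const g) m p = 0"
proof -
  have "cm_mul X (cm_const g) m p
      = Sum_any (\<lambda>i. if m \<le> i then ((of_int i :: complex) gchoose nat (i - m)) * X i p
          * dx (nat (i - m)) g p else 0)"
    using assms smooth_mdo_def by (intro cm_mul_cm_const_right_Sum_any) auto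
  also have "\<dots> = 0"
  proof -
    have "(if m \<le> i then ((of_int i :: complex) gchoose nat (i - m)) * X i p
        * dx (nat (i - m)) g p else 0) = 0" for i
    proof (cases "i < 0")
      case True then show ?thesis using assms(3) by simp
    next
      case False
      then have "((of_int i :: complex) gchoose nat (i - m)) = 0" using assms(6)
        by (intro gchoose_of_int_eq_0) auto
      then show ?thesis by simp
    qed
    then show ?thesis by simp
  qed
  finally show ?thesis using Rep_smdo_conj[OF assms(1,4,5)] by simp
qed

locale gauge_factor =
  fixes e e' :: "int \<Rightarrow> coef"
  assumes se: "\<And>s. cm_smooth (e s)" and se': "\<And>s. cm_smooth (e' s)"
    and ee: "\<And>s p. e s p * e' s p = 1"
begin

definition E :: "int \<Rightarrow> smdo" where "E s = smdo_const (e s)"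
definition E' :: "int \<Rightarrow> smdo" where "E' s = smdo_const (e' s)"

lemma E_E': "E s * E' s = 1"
  unfolding E_def E'_def using smdo_const_mult[OF se se'] ee smdo_const_one by simp

lemma E'_E: "E' s * E s = 1"
  unfolding E_def E'_def using smdo_const_commute[OF se se'] E_E'[unfolded E_def E'_def] by simp

lemma conj_mult: "(E a * x * E' b) * (E b * y * E' c) = E a * (x * y) * E' c"
proof -
  have "(E a * x * E' b) * (E b * y * E' c) = E a * x * (E' b * E b) * y * E' c"
    by (simp add: mult.assoc)
  then show ?thesis by (simp add: E'_E mult.assoc)
qed

lemma conj_power: "(E s * x * E' s) ^ n = E s * x ^ n * E' s"
proof (induction n)
  case 0 then show ?case by (simp add: E_E')
next
  case (Suc n)
  have "(E s * x * E' s) ^ Suc n = (E s * x * E' s) * (E s * x ^ n * E' s)" using Suc by simp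
  also have "\<dots> = E s * (x * x ^ n) * E' s" by (rule conj_mult)
  finally show ?case by simp
qed

definition P_twist :: "(int \<Rightarrow> mdo) \<Rightarrow> int \<Rightarrow> mdo" where
  "P_twist Q s = Rep_smdo (E (s + 1) * Abs_smdo (Q s) * E' s)"

lemma first_order_family_P_twist:
  assumes "first_order_family Q"
  shows "first_order_family (P_twist Q)"
proof -
  have "exact_order (P_twist Q s) 1" for s
  proof -
    have Q: "smooth_mdo (Q s)" "vanishes_above (Q s) 1" "\<And>p. Q s 1 p \<noteq> 0"
      using assms by (auto simp: first_order_family_def exact_order_def)
    have "e (s + 1) p \<noteq> 0" "e' s p \<noteq> 0" for p
      using ee by (metis mult_zero_left mult_zero_right zero_neq_one)+
    then show ?thesis
      unfolding exact_order_def P_twist_def E_def E'_def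
      using smooth_mdo_Rep_smdo vanishes_above_conj[OF Q(1,2) se se']
        conj_coeff_1[OF Q(1,2) se se'] Q(3)
      by simp
  qed
  then show ?thesis unfolding first_order_family_def ..
qed

lemma Rep_smdo_Abs_smdo_P_twist: "Rep_smdo (Abs_smdo (P_twist Q s)) = P_twist Q s"
  unfolding P_twist_def by (simp add: Rep_smdo_inverse)

lemma Abs_smdo_P_twist: "Abs_smdo (P_twist Q s) = E (s + 1) * Abs_smdo (Q s) * E' s"
  unfolding P_twist_def by (simp add: Rep_smdo_inverse)

lemma cm_inv_P_twist:
  assumes "first_order_family Q"
  shows "cm_inv (P_twist Q t) = Rep_smdo (E t * Abs_smdo (cm_inv (Q t)) * E' (t + 1))"
proof -
  let ?Q = "Abs_smdo (Q t)" and ?I = "Abs_smdo (cm_inv (Q t))"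
  have Q: "exact_order (Q t) 1" using assms by (simp add: first_order_family_def)
  from cm_inv_spec[OF Q] have "?I * ?Q = 1" "?Q * ?I = 1"
    using Q by (simp_all add: exact_order_def flip: Abs_smdo_cm_mul one_smdo_def)
  then have "(E t * ?I * E' (t + 1)) * Abs_smdo (P_twist Q t) = 1"
    "Abs_smdo (P_twist Q t) * (E t * ?I * E' (t + 1)) = 1"
    by (simp_all add: Abs_smdo_P_twist conj_mult E_E')
  moreover have "exact_order (Rep_smdo (Abs_smdo (P_twist Q t))) 1"
    using first_order_family_P_twist[OF assms]
    by (simp add: Rep_smdo_Abs_smdo_P_twist first_order_family_def)
  ultimately show ?thesis
    using cm_inv_Rep_smdo by (metis Rep_smdo_Abs_smdo_P_twist)
qed

lemma cm_Pup_P_twist: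
  assumes "first_order_family Q"
  shows "cm_Pup (P_twist Q) s j = Rep_smdo (E (s + int j) * Abs_smdo (cm_Pup Q s j) * E' s)"
proof (induction j)
  case 0
  then show ?case by (simp add: E_E' Rep_smdo_one flip: one_smdo_def)
next
  case (Suc j)
  have g: "smooth_mdo (Q (s + int j))" "smooth_mdo (cm_Pup Q s j)"
    using assms exact_order_cm_Pup[OF assms, of s j]
    by (auto simp: first_order_family_def exact_order_def)
  have "cm_Pup (P_twist Q) s (Suc j)
      = Rep_smdo (Abs_smdo (P_twist Q (s + int j)) * Abs_smdo (cm_Pup (P_twist Q) s j))"
    using exact_order_cm_Pup[OF first_order_family_P_twist[OF assms], of s j]
    by (simp add: Rep_smdo_times Rep_smdo_Abs_smdo_P_twist Rep_smdo_Abs_smdo exact_order_def)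
  also have "Abs_smdo (P_twist Q (s + int j)) * Abs_smdo (cm_Pup (P_twist Q) s j)
     = (E (s + int j + 1) * Abs_smdo (Q (s + int j)) * E' (s + int j))
         * (E (s + int j) * Abs_smdo (cm_Pup Q s j) * E' s)"
    unfolding Abs_smdo_P_twist Suc by (simp only: Rep_smdo_inverse)
  also have "\<dots> = E (s + int j + 1) * (Abs_smdo (Q (s + int j)) * Abs_smdo (cm_Pup Q s j)) * E' s"
    by (rule conj_mult)
  also have "\<dots> = E (s + int (Suc j)) * Abs_smdo (cm_Pup Q s (Suc j)) * E' s"
  proof -
    have "s + int j + 1 = s + int (Suc j)" by simp
    moreover have "Abs_smdo (Q (s + int j)) * Abs_smdo (cm_Pup Q s j)
        = Abs_smdo (cm_Pup Q s (Suc j))"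
      using g by (simp add: Abs_smdo_cm_mul)
    ultimately show ?thesis by (simp only:)
  qed
  finally show ?case .
qed

lemma cm_Pdown_P_twist:
  assumes "first_order_family Q"
  shows "cm_Pdown (P_twist Q) s j = Rep_smdo (E (s - int j) * Abs_smdo (cm_Pdown Q s j) * E' s)"
proof (induction j)
  case 0
  then show ?case by (simp add: E_E' Rep_smdo_one flip: one_smdo_def)
next
  case (Suc j)
  let ?t = "s - int (Suc j)"
  have fam: "first_order_family (P_twist Q)" by (rule first_order_family_P_twist[OF assms])
  then have "exact_order (Q ?t) 1" "exact_order (P_twist Q ?t) 1"
    using assms by (simp_all add: first_order_family_def)
  then have g: "smooth_mdo (cm_inv (Q ?t))" "smooth_mdo (cm_Pdown Q s j)"
    and g2: "smooth_mdo (cm_inv (P_twist Q ?t))" "smooth_mdo (cm_Pdown (P_twist Q) s j)"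
    using cm_inv_spec exact_order_cm_Pdown[OF assms] exact_order_cm_Pdown[OF fam]
    unfolding exact_order_def by blast+
  have t1: "?t + 1 = s - int j" by simp
  have "cm_Pdown (P_twist Q) s (Suc j) = cm_mul (cm_inv (P_twist Q ?t)) (cm_Pdown (P_twist Q) s j)"
    by (simp only: cm_Pdown.simps)
  also have "\<dots> = Rep_smdo (Abs_smdo (cm_inv (P_twist Q ?t)) * Abs_smdo (cm_Pdown (P_twist Q) s j))"
    by (simp only: Rep_smdo_times Rep_smdo_Abs_smdo[OF g2(1)] Rep_smdo_Abs_smdo[OF g2(2)])
  also have "Abs_smdo (cm_inv (P_twist Q ?t)) * Abs_smdo (cm_Pdown (P_twist Q) s j)
     = (E ?t * Abs_smdo (cm_inv (Q ?t)) * E' (s - int j))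
         * (E (s - int j) * Abs_smdo (cm_Pdown Q s j) * E' s)"
    unfolding cm_inv_P_twist[OF assms] Suc t1 by (simp only: Rep_smdo_inverse)
  also have "\<dots> = E ?t * (Abs_smdo (cm_inv (Q ?t)) * Abs_smdo (cm_Pdown Q s j)) * E' s"
    by (rule conj_mult)
  also have "\<dots> = E ?t * Abs_smdo (cm_Pdown Q s (Suc j)) * E' s"
  proof -
    have "Abs_smdo (cm_inv (Q ?t)) * Abs_smdo (cm_Pdown Q s j) = Abs_smdo (cm_Pdown Q s (Suc j))"
      using g by (simp only: Abs_smdo_cm_mul cm_Pdown.simps)
    then show ?thesis by (simp only:)
  qed
  finally show ?case .
qed

lemma cm_Pn_P_twist:
  assumes "first_order_family Q"
  shows "cm_Pn (P_twist Q) s k = Rep_smdo (E (s + k) * Abs_smdo (cm_Pn Q s k) * E' s)"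
proof (cases "k \<ge> 0")
  case True then show ?thesis using cm_Pup_P_twist[OF assms, of s "nat k"] by (simp add: cm_Pn_def)
next
  case False then show ?thesis using cm_Pdown_P_twist[OF assms, of s "nat (- k)"]
    by (simp add: cm_Pn_def)
qed

end

lemma cm_mul_const_conj:
  assumes "smooth_mdo X" "cm_smooth f" "cm_smooth g"
  shows "cm_mul (cm_const f) (cm_mul X (cm_const g))
       = Rep_smdo (smdo_const f * Abs_smdo X * smdo_const g)"
  using assms by (simp add: mult.assoc Rep_smdo_times Rep_smdo_const Rep_smdo_Abs_smdo)

context gauge_factor
begin

lemma cm_Pn_cm_mul_const_right:
  assumes "first_order_family Q"
  shows "cm_mul (cm_Pn Q s k) (cm_const (e' s)) m p = e' (s + k) p * cm_Pn (P_twist Q) s k m p"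
proof -
  have "smooth_mdo (cm_Pn Q s k)" using exact_order_cm_Pn[OF assms] by (simp add: exact_order_def)
  then have "cm_Pn (P_twist Q) s k m p = e (s + k) p * cm_mul (cm_Pn Q s k) (cm_const (e' s)) m p"
    unfolding cm_Pn_P_twist[OF assms] E_def E'_def by (rule Rep_smdo_conj[OF _ se se'])
  then show ?thesis using ee[of "s + k" p] by (simp add: algebra_simps)
qed

lemma P_expansion_conj:
  assumes "first_order_family Q" "smooth_mdo X" "P_expansion X Q s n b"
  shows "P_expansion (Rep_smdo (E s * Abs_smdo X * E' s)) (P_twist Q) s n
           (\<lambda>j p. b j p * e s p * e' (s + (int n - int j)) p)"
  unfolding P_expansion_iff[OF first_order_family_P_twist[OF assms(1)]]
proof (intro allI)
  fix m p
  let ?c = "\<lambda>j. b j p * e s p * e' (s + (int n - int j)) p"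
  have mX: "is_mdo X" using assms(2) smooth_mdo_def by auto
  have "Rep_smdo (E s * Abs_smdo X * E' s) m p = e s p * cm_mul X (cm_const (e' s)) m p"
    unfolding E_def E'_def by (rule Rep_smdo_conj[OF assms(2) se se'])
  also have "\<dots> = e s p
      * Sum_any (\<lambda>j. b j p * cm_mul (cm_Pn Q s (int n - int j)) (cm_const (e' s)) m p)"
    using P_expansion_cm_mul_const_right[OF assms(1,3) mX] by simp
  also have "\<dots> = Sum_any (\<lambda>j. ?c j * cm_Pn (P_twist Q) s (int n - int j) m p)"
    unfolding Sum_any_const_mult[symmetric] cm_Pn_cm_mul_const_right[OF assms(1)]
    by (simp add: algebra_simps)
  also have "\<dots> = (\<Sum>j\<in>{j::nat. int j \<le> int n - m}. ?c j * cm_Pn (P_twist Q) s (int n - int j) m p)"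
  proof (rule Sum_any_eq_sum)
    show "finite {j::nat. int j \<le> int n - m}"
      by (rule finite_subset[of _ "{..nat (int n - m)}"]) auto
    fix j assume "j \<notin> {j::nat. int j \<le> int n - m}"
    then have "m > int n - int j" by simp
    then show "?c j * cm_Pn (P_twist Q) s (int n - int j) m p = 0"
      using exact_order_cm_Pn[OF first_order_family_P_twist[OF assms(1)], of s "int n - int j"]
        vanishes_aboveD
      unfolding exact_order_def by (metis mult_zero_right)
  qed
  finally show "Rep_smdo (E s * Abs_smdo X * E' s) m p =
      (\<Sum>j\<in>{j::nat. int j \<le> int n - m}. ?c j * cm_Pn (P_twist Q) s (int n - int j) m p)" .
qed

lemma cm_b_conj:
  assumes "first_order_family P" "smooth_mdo (L s)" "vanishes_above (cm_pow (L s) n) (int n)"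
  shows "cm_b (\<lambda>s. Rep_smdo (E s * Abs_smdo (L s) * E' s)) (P_twist P) s n
       = (\<lambda>j p. cm_b L P s n j p * e s p * e' (s + (int n - int j)) p)"
proof -
  have pow: "cm_pow (L s) n = Rep_smdo (Abs_smdo (L s) ^ n)"
    using Rep_smdo_power[of "Abs_smdo (L s)" n] Rep_smdo_Abs_smdo[OF assms(2)] by simp
  have "cm_pow (Rep_smdo (E s * Abs_smdo (L s) * E' s)) n
      = Rep_smdo (E s * Abs_smdo (cm_pow (L s) n) * E' s)"
    unfolding Rep_smdo_power conj_power pow by (simp add: Rep_smdo_inverse)
  moreover have "smooth_mdo (cm_pow (L s) n)" unfolding pow by (rule smooth_mdo_Rep_smdo)
  ultimately show ?thesis
    using P_expansion_conj[OF assms(1) _ cm_b_P_expansion[where L = L and s = s, OF assms(1,3)]]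
    by (intro cm_b_eqI[OF first_order_family_P_twist[OF assms(1)]]) simp
qed

end

lemma vanishes_above_cm_pow:
  assumes "smooth_mdo A" "vanishes_above A 1"
  shows "vanishes_above (cm_pow A n) (int n)"
proof (induction n)
  case 0
  then show ?case using vanishes_above_cm_const by (simp add: cm_one_def)
next
  case (Suc n)
  have "smooth_mdo (cm_pow A n)"
    using Rep_smdo_power[of "Abs_smdo A" n] Rep_smdo_Abs_smdo[OF assms(1)] smooth_mdo_Rep_smdo
    by metis
  then have "vanishes_above (cm_mul A (cm_pow A n)) (1 + int n)"
    using vanishes_above_cm_mul[OF assms(2) Suc.IH] assms(1) smooth_mdo_def by blast
  then show ?case by (simp add: add.commute)
qed

lemma cm_b_1_1:
  assumes "first_order_family P" "smooth_mdo (L s)" "vanishes_above (L s) 1" "L s 1 = (\<lambda>p. 1)"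
  shows "cm_b L P s 1 1 p = L s 0 p - P s 0 p / P s 1 p"
proof -
  define b where "b = cm_b L P s 1"
  have "cm_pow (L s) 1 = L s" using assms(2) smooth_mdo_def by (simp add: cm_mul_one_right)
  then have "P_expansion (L s) P s 1 b"
    using cm_b_P_expansion[where L = L and s = s and n = 1, OF assms(1)] assms(3)
    by (simp add: b_def)
  then have expansion: "L s m p = (\<Sum>j\<in>{j::nat. int j \<le> 1 - m}. b j p * cm_Pn P s (1 - int j) m p)"
    for m
    using P_expansion_iff[OF assms(1)] by simp
  have P1: "cm_Pn P s 1 = P s"
    using assms(1) by (simp add: cm_Pn_def cm_mul_one_right first_order_family_def exact_order_def
        smooth_mdo_def)
  have P0: "cm_Pn P s 0 = cm_one" by (simp add: cm_Pn_def)
  have "{j::nat. int j \<le> 1 - 1} = {0}" "{j::nat. int j \<le> 1 - 0} = {0, 1}" by auto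
  then have "1 = b 0 p * P s 1 p" "L s 0 p = b 0 p * P s 0 p + b 1 p"
    using expansion[of 1] expansion[of 0] assms(4)
    by (simp_all add: P1 P0 cm_one_def cm_const_def fun_eq_iff)
  moreover have "P s 1 p \<noteq> 0"
    using assms(1) by (simp add: first_order_family_def exact_order_def)
  ultimately show ?thesis unfolding b_def by (simp add: field_simps)
qed

section \<open>The gauge transformation\<close>

locale cmKP_gauge =
  fixes \<alpha> \<beta> :: complex and L P :: "int \<Rightarrow> mdo" and \<phi> :: "int \<Rightarrow> coef"
  assumes alpha_nonzero: "\<alpha> \<noteq> 0"
    and cmKP: "cmKP \<alpha> L P"
    and phi_smooth: "\<forall>s. cm_smooth (\<phi> s)"
    and phi_x: "\<forall>s. cm_pd 0 (\<phi> s) = cm_b L P s 1 1"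
    and phi_t: "\<forall>n\<ge>1. \<forall>s. cm_pd n (\<phi> s) = cm_b L P s n n"
begin

lemma L_smooth: "smooth_mdo (L s)"
  and L_order: "vanishes_above (L s) 1"
  and L_leading: "L s 1 = (\<lambda>p. 1)"
  using cmKP by (simp_all add: cmKP_def smooth_mdo_def vanishes_above_def)

lemma P_first_order: "first_order_family P"
proof -
  have "cm_smooth (P s m)" for s m
    using cmKP by (cases "m = 0 \<or> m = 1") (auto simp: cmKP_def)
  moreover have "vanishes_above (P s) 1" for s
    using cmKP by (simp add: cmKP_def vanishes_above_def)
  ultimately show ?thesis
    using cmKP unfolding first_order_family_def exact_order_def smooth_mdo_def
        is_mdo_iff_vanishes_above
    by (auto simp: cmKP_def)
qed

lemma P_smooth: "smooth_mdo (P s)"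
  and P_order: "vanishes_above (P s) 1"
  and P_leading_nonzero: "P s 1 p \<noteq> 0"
  using P_first_order by (simp_all add: first_order_family_def exact_order_def)

lemma P_negative: "i < 0 \<Longrightarrow> P s i = (\<lambda>p. 0)"
  and constraint: "(1 - \<alpha>) * P s 1 p * L s 0 p + \<alpha> * P s 0 p = 0"
  and intertwining: "cm_mul (L (s + 1)) (P s) = cm_mul (P s) (L s)"
  and Lax_L: "n \<ge> 1 \<Longrightarrow> cm_dop n (L s) = cm_comm (cm_B \<alpha> L P s n) (L s)"
  and Lax_P: "n \<ge> 1 \<Longrightarrow>
      cm_dop n (P s) = cm_sub (cm_mul (cm_B \<alpha> L P (s + 1) n) (P s)) (cm_mul (P s) (cm_B \<alpha> L P s n))"
  using cmKP by (simp_all add: cmKP_def)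

lemma cm_b_diag_smooth: "n \<ge> 1 \<Longrightarrow> cm_smooth (cm_b L P s n n)"
  using phi_t phi_smooth cm_smooth_cm_pd by metis

definition gauge :: "int \<Rightarrow> coef" where
  "gauge s p = exp ((\<alpha> - \<beta>) * \<phi> s p)"

definition gauge_inv :: "int \<Rightarrow> coef" where
  "gauge_inv s p = exp (- (\<alpha> - \<beta>) * \<phi> s p)"

sublocale gauge_factor gauge gauge_inv
proof
  show "cm_smooth (gauge s)" "cm_smooth (gauge_inv s)" for s
    using phi_smooth unfolding gauge_def[abs_def] gauge_inv_def[abs_def]
    by (auto intro!: cm_smooth_exp cm_smooth_cmult)
  show "gauge s p * gauge_inv s p = 1" for s p
    unfolding gauge_def gauge_inv_def mult_exp_exp by (simp add: algebra_simps)
qed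

definition L_gauge :: "int \<Rightarrow> mdo" where
  "L_gauge s = Rep_smdo (E s * Abs_smdo (L s) * E' s)"

lemma gauge_fold:
  "(\<lambda>p. exp ((\<alpha> - \<beta>) * \<phi> s p)) = gauge s" "(\<lambda>p. exp (- (\<alpha> - \<beta>) * \<phi> s p)) = gauge_inv s"
  by (simp_all add: gauge_def[abs_def] gauge_inv_def[abs_def])

lemma L_gauge_eq:
  "(\<lambda>s. cm_mul (cm_const (\<lambda>p. exp ((\<alpha> - \<beta>) * \<phi> s p)))
          (cm_mul (L s) (cm_const (\<lambda>p. exp (- (\<alpha> - \<beta>) * \<phi> s p))))) = L_gauge"
  unfolding gauge_fold L_gauge_def[abs_def] E_def E'_def
  using cm_mul_const_conj[OF L_smooth se se'] by simp

lemma P_gauge_eq: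
  "(\<lambda>s. cm_mul (cm_const (\<lambda>p. exp ((\<alpha> - \<beta>) * \<phi> (s + 1) p)))
          (cm_mul (P s) (cm_const (\<lambda>p. exp (- (\<alpha> - \<beta>) * \<phi> s p))))) = P_twist P"
  unfolding gauge_fold P_twist_def[abs_def] E_def E'_def
  using cm_mul_const_conj[OF P_smooth se se'] by simp

lemma L_gauge_shape:
  "is_mdo (L_gauge s) \<and> L_gauge s 1 = (\<lambda>p. 1) \<and> (\<forall>m>1. L_gauge s m = (\<lambda>p. 0))
     \<and> (\<forall>m. cm_smooth (L_gauge s m))"
proof -
  have "vanishes_above (L_gauge s) 1"
    unfolding L_gauge_def E_def E'_def by (rule vanishes_above_conj[OF L_smooth L_order se se'])
  moreover have "L_gauge s 1 = (\<lambda>p. 1)"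
    unfolding L_gauge_def E_def E'_def using conj_coeff_1[OF L_smooth L_order se se'] L_leading ee
    by (simp add: fun_eq_iff)
  ultimately show ?thesis
    using smooth_mdo_Rep_smdo unfolding L_gauge_def smooth_mdo_def vanishes_above_def by simp
qed

lemma P_gauge_shape:
  "(\<forall>m. m \<noteq> 0 \<and> m \<noteq> 1 \<longrightarrow> P_twist P s m = (\<lambda>p. 0)) \<and> (\<forall>p. P_twist P s 1 p \<noteq> 0)
     \<and> cm_smooth (P_twist P s 0) \<and> cm_smooth (P_twist P s 1)"
proof -
  have order: "exact_order (P_twist P s) 1"
    using first_order_family_P_twist[OF P_first_order] by (simp add: first_order_family_def)
  have "P_twist P s m = (\<lambda>p. 0)" if "m \<noteq> 0" "m \<noteq> 1" for m
  proof (cases "m < 0")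
    case True
    then show ?thesis
      unfolding P_twist_def E_def E'_def
      using conj_coeff_neg[OF P_smooth P_order P_negative se se'] by (simp add: fun_eq_iff)
  next
    case False
    then have "m > 1" using that by simp
    then show ?thesis using order by (simp add: exact_order_def vanishes_above_def)
  qed
  then show ?thesis using order by (simp add: exact_order_def smooth_mdo_def)
qed

lemma cm_pd_gauge: "cm_pd n (gauge s) = (\<lambda>p. gauge s p * ((\<alpha> - \<beta>) * cm_pd n (\<phi> s) p))"
  and cm_pd_gauge_inv: "cm_pd n (gauge_inv s)
      = (\<lambda>p. - (gauge_inv s p * ((\<alpha> - \<beta>) * cm_pd n (\<phi> s) p)))"
proof -
  have "partially_differentiable (\<lambda>p. c * \<phi> s p)" for c
    using phi_smooth by (simp add: cm_smooth_partially_differentiable cm_smooth_cmult)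
  moreover have "partially_differentiable (\<phi> s)"
    using phi_smooth by (simp add: cm_smooth_partially_differentiable)
  ultimately show "cm_pd n (gauge s) = (\<lambda>p. gauge s p * ((\<alpha> - \<beta>) * cm_pd n (\<phi> s) p))"
    and "cm_pd n (gauge_inv s) = (\<lambda>p. - (gauge_inv s p * ((\<alpha> - \<beta>) * cm_pd n (\<phi> s) p)))"
    unfolding gauge_def[abs_def] gauge_inv_def[abs_def]
    by (simp_all only: cm_pd_exp cm_pd_cmult) (simp_all add: algebra_simps)
qed

lemma alpha_phi_x: "\<alpha> * cm_pd 0 (\<phi> s) p = L s 0 p"
proof -
  have "cm_pd 0 (\<phi> s) p = L s 0 p - P s 0 p / P s 1 p"
    using phi_x cm_b_1_1[where L = L and s = s, OF P_first_order L_smooth L_order L_leading] by simp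
  then have "cm_pd 0 (\<phi> s) p * P s 1 p = L s 0 p * P s 1 p - P s 0 p"
    using P_leading_nonzero[of s p] by (simp add: field_simps)
  then have "\<alpha> * cm_pd 0 (\<phi> s) p * P s 1 p = L s 0 p * P s 1 p"
    using constraint[of s p] by algebra
  then show ?thesis using P_leading_nonzero[of s p] by simp
qed

lemma gauge_constraint: "(1 - \<beta>) * P_twist P s 1 p * L_gauge s 0 p + \<beta> * P_twist P s 0 p = 0"
proof -
  define d where "d = cm_pd 0 (\<phi> s) p"
  define X where "X = (1 - \<beta>) * P s 1 p * (L s 0 p - (\<alpha> - \<beta>) * d)
                      + \<beta> * (P s 0 p - (\<alpha> - \<beta>) * d * P s 1 p)"
  have Pt1: "P_twist P s 1 p = gauge (s + 1) p * P s 1 p * gauge_inv s p"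
    unfolding P_twist_def E_def E'_def by (rule conj_coeff_1[OF P_smooth P_order se se'])
  have Pt0: "P_twist P s 0 p = gauge (s + 1) p * gauge_inv s p * (P s 0 p - (\<alpha> - \<beta>) * d * P s 1 p)"
    unfolding P_twist_def E_def E'_def conj_coeff_0[OF P_smooth P_order se se'] cm_pd_gauge_inv
        d_def
    by (simp add: algebra_simps)
  have Lt0: "L_gauge s 0 p = L s 0 p - (\<alpha> - \<beta>) * d"
    using ee[of s p]
    unfolding L_gauge_def E_def E'_def conj_coeff_0[OF L_smooth L_order se se'] cm_pd_gauge_inv
        d_def
      L_leading
    by algebra
  have "\<alpha> * X = \<beta> * ((1 - \<alpha>) * P s 1 p * L s 0 p + \<alpha> * P s 0 p)
      - (\<alpha> - \<beta>) * P s 1 p * (\<alpha> * d - L s 0 p)"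
    unfolding X_def by algebra
  then have "X = 0"
    using constraint[of s p] alpha_phi_x[of s p] alpha_nonzero by (simp add: d_def)
  moreover have "(1 - \<beta>) * P_twist P s 1 p * L_gauge s 0 p + \<beta> * P_twist P s 0 p
      = gauge (s + 1) p * gauge_inv s p * X"
    unfolding Pt1 Pt0 Lt0 X_def by algebra
  ultimately show ?thesis by simp
qed

lemma gauge_intertwining:
  "cm_mul (L_gauge (s + 1)) (P_twist P s) = cm_mul (P_twist P s) (L_gauge s)"
proof -
  have "Abs_smdo (L (s + 1)) * Abs_smdo (P s) = Abs_smdo (P s) * Abs_smdo (L s)"
    using intertwining[of s] L_smooth P_smooth by (simp flip: Abs_smdo_cm_mul)
  then have "(E (s + 1) * Abs_smdo (L (s + 1)) * E' (s + 1)) * (E (s + 1) * Abs_smdo (P s) * E' s)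
      = (E (s + 1) * Abs_smdo (P s) * E' s) * (E s * Abs_smdo (L s) * E' s)"
    by (simp add: conj_mult)
  then show ?thesis unfolding L_gauge_def P_twist_def by (simp flip: Rep_smdo_times)
qed

definition B_op :: "int \<Rightarrow> nat \<Rightarrow> smdo" where
  "B_op s n = smdo_proj (Abs_smdo (L s) ^ n) - smdo_const (\<lambda>p. \<alpha> * cm_b L P s n n p)"

definition K_op :: "int \<Rightarrow> nat \<Rightarrow> smdo" where
  "K_op s n = smdo_const (\<lambda>p. (\<alpha> - \<beta>) * cm_b L P s n n p)"

lemma Rep_smdo_B_op: "n \<ge> 1 \<Longrightarrow> Rep_smdo (B_op s n) = cm_B \<alpha> L P s n"
  using cm_b_diag_smooth[of n s]
  by (simp add: B_op_def cm_B_def Rep_smdo_minus Rep_smdo_proj Rep_smdo_const cm_smooth_cmult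
      Rep_smdo_Abs_smdo[OF L_smooth] flip: Rep_smdo_power)

lemma Lax_L_smdo:
  "n \<ge> 1 \<Longrightarrow> smdo_deriv n (Abs_smdo (L s)) = B_op s n * Abs_smdo (L s) - Abs_smdo (L s) * B_op s n"
  by (rule Rep_smdo_inject[THEN iffD1])
    (simp add: Rep_smdo_deriv Rep_smdo_Abs_smdo[OF L_smooth] Lax_L Rep_smdo_B_op
      flip: cm_comm_Rep_smdo)

lemma Lax_P_smdo:
  "n \<ge> 1 \<Longrightarrow> smdo_deriv n (Abs_smdo (P s))
      = B_op (s + 1) n * Abs_smdo (P s) - Abs_smdo (P s) * B_op s n"
  by (rule Rep_smdo_inject[THEN iffD1])
    (simp add: Rep_smdo_deriv Rep_smdo_Abs_smdo[OF P_smooth] Lax_P Rep_smdo_B_op Rep_smdo_minus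
      Rep_smdo_times)

lemma smdo_deriv_E: "n \<ge> 1 \<Longrightarrow> smdo_deriv n (E s) = E s * K_op s n"
  and smdo_deriv_E': "n \<ge> 1 \<Longrightarrow> smdo_deriv n (E' s) = - (E' s * K_op s n)"
  using phi_t cm_b_diag_smooth[of n s] se[of s] se'[of s]
  by (simp_all add: E_def E'_def K_op_def smdo_deriv_const cm_pd_gauge cm_pd_gauge_inv
      smdo_const_mult
      cm_smooth_cmult cm_smooth_mult flip: smdo_const_uminus)

lemma K_op_commute: "n \<ge> 1 \<Longrightarrow> K_op s n * E t = E t * K_op s n"
  and K_op_commute': "n \<ge> 1 \<Longrightarrow> K_op s n * E' t = E' t * K_op s n"
  using cm_b_diag_smooth[of n s]
  by (simp_all add: K_op_def E_def E'_def smdo_const_commute se se' cm_smooth_cmult)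

lemma cm_b_gauge_diag: "cm_b L_gauge (P_twist P) s n n = cm_b L P s n n"
  using cm_b_conj[OF P_first_order L_smooth vanishes_above_cm_pow[OF L_smooth L_order]] ee
  by (simp add: L_gauge_def[abs_def] fun_eq_iff mult.assoc)

lemma cm_B_gauge:
  assumes "n \<ge> 1"
  shows "cm_B \<beta> L_gauge (P_twist P) s n = Rep_smdo (E s * B_op s n * E' s + K_op s n)"
proof -
  let ?b = "\<lambda>c p. c * cm_b L P s n n p"
  have smooth: "cm_smooth (?b c)" for c using cm_b_diag_smooth[OF assms] by (rule cm_smooth_cmult)
  have "cm_pow (L_gauge s) n = Rep_smdo (E s * Abs_smdo (L s) ^ n * E' s)"
    unfolding L_gauge_def Rep_smdo_power conj_power ..
  then have "cm_B \<beta> L_gauge (P_twist P) s n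
      = Rep_smdo (E s * smdo_proj (Abs_smdo (L s) ^ n) * E' s - smdo_const (?b \<beta>))"
    using smooth[of \<beta>]
    by (simp add: cm_B_def cm_b_gauge_diag E_def E'_def Rep_smdo_minus Rep_smdo_const
        flip: Rep_smdo_proj smdo_proj_conj[OF se se'])
  also have "E s * smdo_proj (Abs_smdo (L s) ^ n) * E' s - smdo_const (?b \<beta>)
      = E s * B_op s n * E' s + K_op s n"
  proof -
    have "E s * smdo_const (?b \<alpha>) * E' s = smdo_const (?b \<alpha>)"
      using smdo_const_commute[OF se smooth] E_E' by (simp add: E_def E'_def mult.assoc)
    moreover have "smdo_const (?b \<alpha>) - smdo_const (?b \<beta>) = K_op s n"
      using smdo_const_diff[OF smooth smooth] by (simp add: K_op_def algebra_simps)
    ultimately show ?thesis by (simp add: B_op_def algebra_simps)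
  qed
  finally show ?thesis .
qed

lemma gauge_Lax_L:
  assumes "n \<ge> 1"
  shows "cm_dop n (L_gauge s) = cm_comm (cm_B \<beta> L_gauge (P_twist P) s n) (L_gauge s)"
proof -
  have "E' s * (E s * x) = x" for x using E'_E by (simp flip: mult.assoc)
  moreover have "K_op s n * (E s * x) = E s * (K_op s n * x)" for x
    using K_op_commute[OF assms] by (simp flip: mult.assoc)
  ultimately have "smdo_deriv n (E s * Abs_smdo (L s) * E' s)
      = (E s * B_op s n * E' s + K_op s n) * (E s * Abs_smdo (L s) * E' s)
        - (E s * Abs_smdo (L s) * E' s) * (E s * B_op s n * E' s + K_op s n)"
    using assms
    by (simp add: smdo_deriv_mult smdo_deriv_E smdo_deriv_E' Lax_L_smdo K_op_commute' algebra_simps)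
  then show ?thesis
    unfolding cm_B_gauge[OF assms] L_gauge_def cm_comm_Rep_smdo by (simp flip: Rep_smdo_deriv)
qed

lemma gauge_Lax_P:
  assumes "n \<ge> 1"
  shows "cm_dop n (P_twist P s)
    = cm_sub (cm_mul (cm_B \<beta> L_gauge (P_twist P) (s + 1) n) (P_twist P s))
        (cm_mul (P_twist P s) (cm_B \<beta> L_gauge (P_twist P) s n))"
proof -
  have "E' t * (E t * x) = x" for t x using E'_E by (simp flip: mult.assoc)
  moreover have "K_op t n * (E t * x) = E t * (K_op t n * x)" for t x
    using K_op_commute[OF assms] by (simp flip: mult.assoc)
  ultimately have "smdo_deriv n (E (s + 1) * Abs_smdo (P s) * E' s)
      = (E (s + 1) * B_op (s + 1) n * E' (s + 1) + K_op (s + 1) n)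
          * (E (s + 1) * Abs_smdo (P s) * E' s)
        - (E (s + 1) * Abs_smdo (P s) * E' s) * (E s * B_op s n * E' s + K_op s n)"
    using assms
    by (simp add: smdo_deriv_mult smdo_deriv_E smdo_deriv_E' Lax_P_smdo K_op_commute' algebra_simps)
  then show ?thesis
    unfolding cm_B_gauge[OF assms] P_twist_def
    by (simp add: cm_sub_def[symmetric] flip: Rep_smdo_times Rep_smdo_minus Rep_smdo_deriv)
qed

end

theorem mainTheorem18:
  fixes \<alpha> \<beta> :: complex
    and L P :: "int \<Rightarrow> mdo"
    and \<phi> :: "int \<Rightarrow> coef"
  assumes "\<alpha> \<noteq> 0"
    and "cmKP \<alpha> L P"
    and "\<forall>s. cm_smooth (\<phi> s)"
    and "\<forall>s. cm_pd 0 (\<phi> s) = cm_b L P s 1 1"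
    and "\<forall>n\<ge>1. \<forall>s. cm_pd n (\<phi> s) = cm_b L P s n n"
  shows "cmKP \<beta>
     (\<lambda>s. cm_mul (cm_const (\<lambda>p. exp ((\<alpha> - \<beta>) * \<phi> s p)))
            (cm_mul (L s) (cm_const (\<lambda>p. exp (- (\<alpha> - \<beta>) * \<phi> s p)))))
     (\<lambda>s. cm_mul (cm_const (\<lambda>p. exp ((\<alpha> - \<beta>) * \<phi> (s + 1) p)))
            (cm_mul (P s) (cm_const (\<lambda>p. exp (- (\<alpha> - \<beta>) * \<phi> s p)))))"
proof -
  interpret cmKP_gauge \<alpha> \<beta> L P \<phi>
    using assms by unfold_locales
  show ?thesis
    unfolding L_gauge_eq P_gauge_eq cmKP_def
    by (simp add: L_gauge_shape P_gauge_shape gauge_constraint gauge_intertwining gauge_Lax_L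
        gauge_Lax_P)
qed

end
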